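(* Let $G$ be a graph with edge set $E$, $C\subseteq E$, and $k\ge1$. If $k=1$, then $C$ is a circuit of $M_1(G)$ iff $G\langle C\rangle$ is a bicycle. If $k\ge2$, then $C$ is a circuit of $M_k(G)$ if and only if there exist a circuit $C'$ of $M_{k-1}(G)$ and a subgraph $P$ of $G$ with $E(P)\cap C'=\emptyset$ such that $G\langle C\rangle=G\langle C'\rangle\cup P$, where $P$ is a path, a cycle, a lollipop, or a bicycle, and: (l,p) if $P$ is a lollipop or a path then $V(G\langle C'\rangle)\cap V(P)=End(P)$; (c) if $P$ is a cycle then $|V(G\langle C'\rangle)\cap V(P)|=1$; (b) if $P$ is a bicycle then $V(G\langle C'\rangle)\cap V(P)=\emptyset$.
   Context: Graphs are finite, may have loops and parallel edges. A leaf is a vertex incident to exactly one edge, which is not a loop. $\Delta H=|E(H)|-|V(H)|$. For $X\subseteq E$, $G\langle X\rangle$ is the subgraph with edge set $X$ and vertex set the vertices incident to edges of $X$. A cycle is a connected graph all of whose vertices have degree 2 (a loop contributes 2). A path with end vertices $x\neq y$ has at least one edge and $End(P)=\{x,y\}$. A lollipop is obtained from a cycle $C$ (possibly a loop) and a vertex-disjoint path with end vertices $y,x$ by identifying a vertex of $C$ with $y$; $End=\{x\}$. A bicycle is a connected graph with no leaves and $\Delta=1$. For $k\ge0$, $M_k(G)$ is the matroid on $E$ whose circuits are the inclusion-minimal members of $\{C\subseteq E:C\neq\emptyset,\ |C|=|V(G\langle C\rangle)|+k\}$. *)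

theory Defs
  imports Main
begin

text \<open>A multigraph (loops and parallel edges allowed) is given by a vertex set V,
an edge set E and an incidence map inc assigning to each edge its set of end vertices
(one vertex for a loop, two vertices otherwise).\<close>

definition graph :: "'v set \<Rightarrow> 'e set \<Rightarrow> ('e \<Rightarrow> 'v set) \<Rightarrow> bool" where
  "graph V E inc \<longleftrightarrow> finite V \<and> finite E \<and>
     (\<forall>e\<in>E. inc e \<subseteq> V \<and> (card (inc e) = 1 \<or> card (inc e) = 2))"

definition is_loop :: "('e \<Rightarrow> 'v set) \<Rightarrow> 'e \<Rightarrow> bool" where
  "is_loop inc e \<longleftrightarrow> card (inc e) = 1"

definition verts :: "('e \<Rightarrow> 'v set) \<Rightarrow> 'e set \<Rightarrow> 'v set" where
  "verts inc X = \<Union> (inc ` X)"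

definition is_subgraph :: "'v set \<Rightarrow> 'e set \<Rightarrow> ('e \<Rightarrow> 'v set) \<Rightarrow> 'v set \<Rightarrow> 'e set \<Rightarrow> bool" where
  "is_subgraph V E inc W F \<longleftrightarrow> W \<subseteq> V \<and> F \<subseteq> E \<and> (\<forall>e\<in>F. inc e \<subseteq> W)"

definition deg :: "('e \<Rightarrow> 'v set) \<Rightarrow> 'e set \<Rightarrow> 'v \<Rightarrow> nat" where
  "deg inc F v = (\<Sum>e\<in>{e\<in>F. v \<in> inc e}. if is_loop inc e then 2 else 1)"

definition connected_gr :: "('e \<Rightarrow> 'v set) \<Rightarrow> 'v set \<Rightarrow> 'e set \<Rightarrow> bool" where
  "connected_gr inc W F \<longleftrightarrow> W \<noteq> {} \<and>
     (\<forall>u\<in>W. \<forall>w\<in>W. (u, w) \<in> {(a, b). \<exists>e\<in>F. a \<in> inc e \<and> b \<in> inc e}\<^sup>*)"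

definition is_leaf :: "('e \<Rightarrow> 'v set) \<Rightarrow> 'e set \<Rightarrow> 'v \<Rightarrow> bool" where
  "is_leaf inc F v \<longleftrightarrow> (\<exists>e. {f\<in>F. v \<in> inc f} = {e} \<and> \<not> is_loop inc e)"

definition finite_gr :: "('e \<Rightarrow> 'v set) \<Rightarrow> 'v set \<Rightarrow> 'e set \<Rightarrow> bool" where
  "finite_gr inc W F \<longleftrightarrow> finite W \<and> finite F \<and> (\<forall>e\<in>F. inc e \<subseteq> W)"

definition is_cycle :: "('e \<Rightarrow> 'v set) \<Rightarrow> 'v set \<Rightarrow> 'e set \<Rightarrow> bool" where
  "is_cycle inc W F \<longleftrightarrow> finite_gr inc W F \<and> connected_gr inc W F \<and> (\<forall>v\<in>W. deg inc F v = 2)"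

definition is_bicycle :: "('e \<Rightarrow> 'v set) \<Rightarrow> 'v set \<Rightarrow> 'e set \<Rightarrow> bool" where
  "is_bicycle inc W F \<longleftrightarrow> finite_gr inc W F \<and> connected_gr inc W F \<and>
     (\<forall>v\<in>W. \<not> is_leaf inc F v) \<and> int (card F) - int (card W) = 1"

definition is_path :: "('e \<Rightarrow> 'v set) \<Rightarrow> 'v set \<Rightarrow> 'e set \<Rightarrow> 'v \<Rightarrow> 'v \<Rightarrow> bool" where
  "is_path inc W F x y \<longleftrightarrow> x \<noteq> y \<and>
     (\<exists>vs es. es \<noteq> [] \<and> length vs = length es + 1 \<and> distinct vs \<and> distinct es \<and>
        hd vs = x \<and> last vs = y \<and>
        (\<forall>i<length es. inc (es ! i) = {vs ! i, vs ! Suc i}) \<and>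
        W = set vs \<and> F = set es)"

definition is_lollipop :: "('e \<Rightarrow> 'v set) \<Rightarrow> 'v set \<Rightarrow> 'e set \<Rightarrow> 'v \<Rightarrow> bool" where
  "is_lollipop inc W F x \<longleftrightarrow>
     (\<exists>W1 F1 W2 F2 y. is_cycle inc W1 F1 \<and> is_path inc W2 F2 y x \<and>
        W1 \<inter> W2 = {y} \<and> F1 \<inter> F2 = {} \<and> W = W1 \<union> W2 \<and> F = F1 \<union> F2)"

definition Mk_circuit :: "'e set \<Rightarrow> ('e \<Rightarrow> 'v set) \<Rightarrow> nat \<Rightarrow> 'e set \<Rightarrow> bool" where
  "Mk_circuit E inc k C \<longleftrightarrow>
     (let S = {D. D \<subseteq> E \<and> D \<noteq> {} \<and> card D = card (verts inc D) + k}
      in C \<in> S \<and> (\<forall>D\<in>S. D \<subseteq> C \<longrightarrow> D = C))"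

end

theory Submission
  imports Defs
begin

text \<open>
  Write excess X = |X| - |V(G\<langle>X\<rangle>)|, so the circuits of M_k are the edge sets of excess k all of
  whose proper subsets have smaller excess. Removing an edge lowers the excess by at most one; hence
  inside a circuit C of M_(k+1) a smallest subset of excess k is a circuit C' of M_k, and F = C - C'
  is an ear attached to U = V(G\<langle>C'\<rangle>): it has excess 1 when the vertices in U are not counted, and
  no proper subset has positive excess in that sense. Conversely, adding such an ear to a circuit
  of M_k gives a circuit of M_(k+1).

  To see what an ear looks like, count degrees over its vertices outside U. Each has degree at
  least 2 (otherwise deleting its only edge leaves a proper subset of positive excess), while the
  degree sum is 2|F| minus the number of edge ends in U; so at most two ends lie in U. With no end
  in U the ear is a bicycle; an edge with both ends in U is the whole ear, a loop (cycle) or a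
  single edge (path); a single edge with one end in U makes a lollipop; two such edges make a cycle
  or a path. Conversely each of these four shapes, attached as in the theorem, is an ear. For k = 1
  the same argument with U = {} leaves only the bicycles.
\<close>

subsection \<open>Edge sets and excess\<close>

definition multigraph_edges :: "('e \<Rightarrow> 'v set) \<Rightarrow> 'e set \<Rightarrow> bool" where
  "multigraph_edges inc F \<longleftrightarrow> finite F \<and> (\<forall>e\<in>F. card (inc e) = 1 \<or> card (inc e) = 2)"

definition end_mult :: "('e \<Rightarrow> 'v set) \<Rightarrow> 'e \<Rightarrow> nat" where
  "end_mult inc e = (if is_loop inc e then 2 else 1)"

definition ends_in :: "('e \<Rightarrow> 'v set) \<Rightarrow> 'v set \<Rightarrow> 'e \<Rightarrow> nat" where
  "ends_in inc N e = card (N \<inter> inc e) * end_mult inc e"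

definition excess :: "('e \<Rightarrow> 'v set) \<Rightarrow> 'e set \<Rightarrow> int" where
  "excess inc X = int (card X) - int (card (verts inc X))"

text \<open>For U = {} this is connectedness of G\<langle>F\<rangle>.\<close>
definition inseparable :: "('e \<Rightarrow> 'v set) \<Rightarrow> 'v set \<Rightarrow> 'e set \<Rightarrow> bool" where
  "inseparable inc U F \<longleftrightarrow> \<not> (\<exists>Q R. Q \<union> R = F \<and> Q \<inter> R = {} \<and> Q \<noteq> {} \<and> R \<noteq> {} \<and>
      verts inc Q \<inter> verts inc R \<subseteq> U)"

lemma inseparableD:
  assumes "inseparable inc U F" "Q \<union> R = F" "Q \<inter> R = {}" "Q \<noteq> {}" "R \<noteq> {}"
    "verts inc Q \<inter> verts inc R \<subseteq> U"
  shows False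
  using assms unfolding inseparable_def by blast

lemma inseparable_mono: "inseparable inc U F \<Longrightarrow> U' \<subseteq> U \<Longrightarrow> inseparable inc U' F"
  unfolding inseparable_def by blast

lemma multigraph_edges_subset: "multigraph_edges inc F \<Longrightarrow> G \<subseteq> F \<Longrightarrow> multigraph_edges inc G"
  unfolding multigraph_edges_def by (auto intro: finite_subset)

lemma multigraph_edges_finite: "multigraph_edges inc F \<Longrightarrow> finite F"
  unfolding multigraph_edges_def by auto

lemma multigraph_edges_card:
  "multigraph_edges inc F \<Longrightarrow> e \<in> F \<Longrightarrow> card (inc e) = 1 \<or> card (inc e) = 2"
  unfolding multigraph_edges_def by auto

lemma finite_inc: "multigraph_edges inc F \<Longrightarrow> e \<in> F \<Longrightarrow> finite (inc e)"
  by (metis card.infinite multigraph_edges_card zero_neq_numeral zero_neq_one)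

lemma inc_nonempty: "multigraph_edges inc F \<Longrightarrow> e \<in> F \<Longrightarrow> inc e \<noteq> {}"
  using multigraph_edges_card by fastforce

lemma graph_multigraph_edges: "graph V E inc \<Longrightarrow> X \<subseteq> E \<Longrightarrow> multigraph_edges inc X"
  unfolding graph_def multigraph_edges_def by (meson finite_subset subsetD)

lemma verts_Un: "verts inc (A \<union> B) = verts inc A \<union> verts inc B"
  unfolding verts_def by auto

lemma verts_mono: "A \<subseteq> B \<Longrightarrow> verts inc A \<subseteq> verts inc B"
  unfolding verts_def by auto

lemma verts_empty [simp]: "verts inc {} = {}"
  unfolding verts_def by auto

lemma verts_insert: "verts inc (insert e A) = inc e \<union> verts inc A"
  unfolding verts_def by auto

lemma verts_iff: "v \<in> verts inc A \<longleftrightarrow> (\<exists>e\<in>A. v \<in> inc e)"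
  unfolding verts_def by auto

lemma inc_subset_verts: "e \<in> A \<Longrightarrow> inc e \<subseteq> verts inc A"
  unfolding verts_def by auto

lemma finite_verts: "multigraph_edges inc F \<Longrightarrow> finite (verts inc F)"
  unfolding verts_def by (auto intro: finite_inc multigraph_edges_finite)

lemma is_subgraph_verts: "graph V E inc \<Longrightarrow> F \<subseteq> E \<Longrightarrow> is_subgraph V E inc (verts inc F) F"
  unfolding is_subgraph_def graph_def verts_def by blast

lemma excess_empty [simp]: "excess inc {} = 0"
  by (simp add: excess_def)

lemma card_Un_Diff: "finite A \<Longrightarrow> finite B \<Longrightarrow> card (A \<union> B) = card A + card (B - A)"
  by (metis Diff_disjoint Un_Diff_cancel card_Un_disjoint finite_Diff)

lemma excess_Un_disjoint:
  assumes "multigraph_edges inc (A \<union> B)" "A \<inter> B = {}"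
  shows "excess inc (A \<union> B) = excess inc A + int (card B) - int (card (verts inc B - verts inc A))"
proof -
  have "multigraph_edges inc A" "multigraph_edges inc B"
    using multigraph_edges_subset[OF assms(1)] by blast+
  then have "finite A" "finite B" "finite (verts inc A)" "finite (verts inc B)"
    using multigraph_edges_finite finite_verts by blast+
  then show ?thesis
    using assms(2) by (simp add: excess_def verts_Un card_Un_disjoint card_Un_Diff)
qed

subsection \<open>Degrees\<close>

lemma deg_conv_sum: "finite F \<Longrightarrow> deg inc F v = (\<Sum>e\<in>F. if v \<in> inc e then end_mult inc e else 0)"
  unfolding deg_def end_mult_def by (simp add: sum.inter_filter)

lemma sum_deg:
  assumes "finite F" "finite N"
  shows "(\<Sum>v\<in>N. deg inc F v) = (\<Sum>e\<in>F. ends_in inc N e)"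
proof -
  have "(\<Sum>v\<in>N. deg inc F v) = (\<Sum>e\<in>F. \<Sum>v\<in>N. if v \<in> inc e then end_mult inc e else 0)"
    using assms by (simp add: deg_conv_sum sum.swap[of _ N])
  also have "\<dots> = (\<Sum>e\<in>F. ends_in inc N e)"
    using assms(2) by (simp add: ends_in_def sum.If_cases Int_def)
  finally show ?thesis .
qed

lemma ends_in_inside: "multigraph_edges inc F \<Longrightarrow> e \<in> F \<Longrightarrow> inc e \<subseteq> N \<Longrightarrow> ends_in inc N e = 2"
  using multigraph_edges_card[of inc F e]
  by (auto simp: ends_in_def end_mult_def is_loop_def Int_absorb1)

lemma ends_in_outside:
  assumes "multigraph_edges inc F" "e \<in> F" "\<not> inc e \<subseteq> N"
  shows "ends_in inc N e \<le> 1"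
proof -
  have "card (N \<inter> inc e) < card (inc e)"
    using assms finite_inc[OF assms(1,2)] by (intro psubset_card_mono) auto
  then show ?thesis
    using multigraph_edges_card[OF assms(1,2)] by (auto simp: ends_in_def end_mult_def is_loop_def)
qed

lemma ends_in_eq_1:
  assumes "multigraph_edges inc F" "e \<in> F" "ends_in inc N e = 1"
  obtains u n where "inc e = {u, n}" "u \<noteq> n" "u \<notin> N" "n \<in> N"
proof -
  have "card (N \<inter> inc e) = 1" "\<not> is_loop inc e"
    using assms(3) by (auto simp: ends_in_def end_mult_def split: if_splits)
  moreover have "card (inc e) = 2"
    using multigraph_edges_card[OF assms(1,2)] calculation by (auto simp: is_loop_def)
  ultimately obtain a b x where ab: "inc e = {a, b}" "a \<noteq> b" and x: "N \<inter> inc e = {x}"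
    by (auto simp: card_2_iff card_1_singleton_iff)
  show ?thesis
  proof (cases "x = b")
    case True
    then show ?thesis using that ab x by blast
  next
    case False
    then have "x = a" "b \<notin> N" using ab x by auto
    then show ?thesis using that[of b a] ab x by (auto simp: insert_commute)
  qed
qed

lemma ends_in_eq_0: "ends_in inc N e = 0 \<Longrightarrow> finite (inc e) \<Longrightarrow> N \<inter> inc e = {}"
  by (simp add: ends_in_def end_mult_def split: if_splits)

lemma sum_deg_split:
  assumes "multigraph_edges inc F" "finite N"
  shows "(\<Sum>v\<in>N. deg inc F v) =
    2 * card {e\<in>F. inc e \<subseteq> N} + (\<Sum>e\<in>{e\<in>F. \<not> inc e \<subseteq> N}. ends_in inc N e)"
proof -
  have fF: "finite F" using assms(1) multigraph_edges_finite by blast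
  have "(\<Sum>e\<in>F. ends_in inc N e) =
      (\<Sum>e\<in>{e\<in>F. inc e \<subseteq> N}. ends_in inc N e) + (\<Sum>e\<in>{e\<in>F. \<not> inc e \<subseteq> N}. ends_in inc N e)"
    using fF by (subst sum.union_disjoint[symmetric]) (auto intro: sum.cong)
  moreover have "(\<Sum>e\<in>{e\<in>F. inc e \<subseteq> N}. ends_in inc N e) = 2 * card {e\<in>F. inc e \<subseteq> N}"
    using ends_in_inside[OF assms(1)] by simp
  ultimately show ?thesis using sum_deg[OF fF assms(2)] by simp
qed

lemma card_incident_le_deg: "finite F \<Longrightarrow> card {e\<in>F. v \<in> inc e} \<le> deg inc F v"
  unfolding deg_def
  using sum_mono[of "{e\<in>F. v \<in> inc e}" "\<lambda>_. 1::nat" "\<lambda>e. if is_loop inc e then 2 else 1"]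
  by auto

lemma deg_Diff_edge:
  "finite F \<Longrightarrow> e \<in> F \<Longrightarrow> deg inc F v = deg inc (F - {e}) v + (if v \<in> inc e then end_mult inc e else 0)"
  by (simp add: deg_conv_sum sum.remove add.commute)

lemma deg_pos_iff:
  assumes "finite F"
  shows "0 < deg inc F v \<longleftrightarrow> v \<in> verts inc F"
proof
  assume "0 < deg inc F v"
  then have "{e\<in>F. v \<in> inc e} \<noteq> {}"
    unfolding deg_def by (metis (no_types, lifting) less_irrefl sum.empty)
  then show "v \<in> verts inc F" by (auto simp: verts_iff)
next
  assume "v \<in> verts inc F"
  then have "card {e\<in>F. v \<in> inc e} > 0"
    using assms by (auto simp: verts_iff card_gt_0_iff)
  then show "0 < deg inc F v" using card_incident_le_deg[OF assms, of v inc] by linarith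
qed

lemma deg_eq_end_mult: "finite F \<Longrightarrow> {e\<in>F. v \<in> inc e} = {e0} \<Longrightarrow> deg inc F v = end_mult inc e0"
  unfolding deg_def end_mult_def by simp

lemma deg_eq_end_mult2:
  "finite F \<Longrightarrow> {e\<in>F. v \<in> inc e} = {e1, e2} \<Longrightarrow> e1 \<noteq> e2 \<Longrightarrow>
    deg inc F v = end_mult inc e1 + end_mult inc e2"
  unfolding deg_def end_mult_def by simp

lemma end_mult_eq_1: "card (inc e) = 2 \<Longrightarrow> end_mult inc e = 1"
  unfolding end_mult_def is_loop_def by simp

lemma pendant_edge:
  assumes "multigraph_edges inc F" "deg inc F a = 1"
  obtains e c where "e \<in> F" "inc e = {a, c}" "a \<noteq> c" "{e\<in>F. a \<in> inc e} = {e}" "end_mult inc e = 1"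
proof -
  have fF: "finite F" using assms(1) multigraph_edges_finite by blast
  have "card {e\<in>F. a \<in> inc e} \<le> 1" "{e\<in>F. a \<in> inc e} \<noteq> {}"
    using card_incident_le_deg[OF fF, of a inc] deg_pos_iff[OF fF, of inc a] assms(2)
    by (auto simp: verts_iff)
  then have "card {e\<in>F. a \<in> inc e} = 1" using fF by (simp add: le_Suc_eq) blast
  then obtain e where S: "{e\<in>F. a \<in> inc e} = {e}" by (rule card_1_singletonE)
  then have eF: "e \<in> F" and ae: "a \<in> inc e" by auto
  have m: "end_mult inc e = 1" using deg_eq_end_mult[OF fF S] assms(2) by simp
  then have "card (inc e) = 2"
    using multigraph_edges_card[OF assms(1) eF] by (auto simp: end_mult_def is_loop_def)
  then obtain c where "inc e = {a, c}" "a \<noteq> c"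
    using ae by (auto simp: card_2_iff doubleton_eq_iff)
  then show ?thesis using that eF S m by blast
qed

subsection \<open>Connectivity\<close>

definition adj :: "('e \<Rightarrow> 'v set) \<Rightarrow> 'e set \<Rightarrow> ('v \<times> 'v) set" where
  "adj inc F = {(a, b). \<exists>e\<in>F. a \<in> inc e \<and> b \<in> inc e}"

lemma connected_gr_iff_adj:
  "connected_gr inc W F \<longleftrightarrow> W \<noteq> {} \<and> (\<forall>u\<in>W. \<forall>w\<in>W. (u, w) \<in> (adj inc F)\<^sup>*)"
  unfolding connected_gr_def adj_def by simp

lemma adj_rtrancl_sym: "(a, b) \<in> (adj inc F)\<^sup>* \<Longrightarrow> (b, a) \<in> (adj inc F)\<^sup>*"
proof -
  have "(adj inc F)\<inverse> = adj inc F" unfolding adj_def by auto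
  then show "(a, b) \<in> (adj inc F)\<^sup>* \<Longrightarrow> (b, a) \<in> (adj inc F)\<^sup>*"
    by (metis rtrancl_converseI)
qed

lemma adj_rtrancl_closed:
  assumes "(a, b) \<in> (adj inc F)\<^sup>*" "a \<in> verts inc Q" "Q \<union> R = F" "verts inc Q \<inter> verts inc R = {}"
  shows "b \<in> verts inc Q"
  using assms(1,2)
proof (induction rule: rtrancl_induct)
  case (step y z)
  then obtain e where e: "e \<in> F" "y \<in> inc e" "z \<in> inc e" unfolding adj_def by auto
  show ?case
  proof (cases "e \<in> Q")
    case False
    then have "y \<in> verts inc R" using e assms(3) by (auto simp: verts_iff)
    then show ?thesis using step assms(4) by auto
  qed (use e in \<open>auto simp: verts_iff\<close>)
qed

lemma connected_inseparable:
  assumes "multigraph_edges inc F" "connected_gr inc W F" "\<forall>e\<in>F. inc e \<subseteq> W"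
  shows "inseparable inc {} F"
  unfolding inseparable_def
proof
  assume "\<exists>Q R. Q \<union> R = F \<and> Q \<inter> R = {} \<and> Q \<noteq> {} \<and> R \<noteq> {} \<and> verts inc Q \<inter> verts inc R \<subseteq> {}"
  then obtain Q R e1 e2 where s: "Q \<union> R = F" "verts inc Q \<inter> verts inc R = {}" "e1 \<in> Q" "e2 \<in> R"
    by blast
  then have "e1 \<in> F" "e2 \<in> F" by auto
  then obtain a b where a: "a \<in> inc e1" and b: "b \<in> inc e2"
    using inc_nonempty[OF assms(1)] by blast
  have "(a, b) \<in> (adj inc F)\<^sup>*"
    using assms(2,3) a b \<open>e1 \<in> F\<close> \<open>e2 \<in> F\<close> unfolding connected_gr_iff_adj by blast
  moreover have "a \<in> verts inc Q" "b \<in> verts inc R" using a b s by (auto simp: verts_iff)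
  ultimately show False using adj_rtrancl_closed[OF _ _ s(1,2)] s(2) by blast
qed

lemma inseparable_connected:
  assumes "multigraph_edges inc F" "F \<noteq> {}" "inseparable inc {} F"
  shows "connected_gr inc (verts inc F) F"
proof -
  obtain e0 where e0: "e0 \<in> F" using assms(2) by blast
  obtain a where a: "a \<in> inc e0" using inc_nonempty[OF assms(1) e0] by blast
  define Q where "Q = {e\<in>F. \<exists>x\<in>inc e. (a, x) \<in> (adj inc F)\<^sup>*}"
  have reach: "(a, v) \<in> (adj inc F)\<^sup>*" if "e \<in> Q" "v \<in> inc e" for e v
  proof -
    obtain x where x: "x \<in> inc e" "(a, x) \<in> (adj inc F)\<^sup>*" using \<open>e \<in> Q\<close> unfolding Q_def by blast
    have "(x, v) \<in> adj inc F" using x that unfolding adj_def Q_def by auto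
    then show ?thesis using x by (meson rtrancl.rtrancl_into_rtrancl)
  qed
  have "verts inc Q \<inter> verts inc (F - Q) = {}"
  proof (rule ccontr)
    assume "verts inc Q \<inter> verts inc (F - Q) \<noteq> {}"
    then obtain v e1 e2 where "e1 \<in> Q" "v \<in> inc e1" "e2 \<in> F - Q" "v \<in> inc e2"
      unfolding verts_def by blast
    then have "(a, v) \<in> (adj inc F)\<^sup>*" using reach by blast
    then show False using \<open>e2 \<in> F - Q\<close> \<open>v \<in> inc e2\<close> unfolding Q_def by auto
  qed
  moreover have "e0 \<in> Q" using e0 a unfolding Q_def by auto
  ultimately have "F - Q = {}"
    using inseparableD[OF assms(3), of Q "F - Q"] unfolding Q_def by blast
  then have from_a: "(a, v) \<in> (adj inc F)\<^sup>*" if "v \<in> verts inc F" for v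
    using that reach by (auto simp: verts_iff)
  have "(u, w) \<in> (adj inc F)\<^sup>*" if "u \<in> verts inc F" "w \<in> verts inc F" for u w
    using adj_rtrancl_sym[OF from_a[OF that(1)]] from_a[OF that(2)] by (rule rtrancl_trans)
  moreover have "verts inc F \<noteq> {}" using e0 a unfolding verts_def by blast
  ultimately show ?thesis unfolding connected_gr_iff_adj by blast
qed

lemma connected_gr_singleton: "connected_gr inc {u} F"
  unfolding connected_gr_def by auto

lemma connected_gr_in_verts:
  assumes "connected_gr inc W F" "v \<in> W" "w \<in> W" "v \<noteq> w"
  shows "v \<in> verts inc F"
proof -
  have "(v, w) \<in> (adj inc F)\<^sup>*" using assms unfolding connected_gr_iff_adj by auto
  then show ?thesis
    using assms(4) by (cases rule: converse_rtranclE) (auto simp: adj_def verts_iff)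
qed


subsection \<open>Paths\<close>

lemma is_pathE:
  assumes "is_path inc W F x y"
  obtains vs es where "x \<noteq> y" "es \<noteq> []" "length vs = length es + 1" "distinct vs" "distinct es"
    "hd vs = x" "last vs = y" "\<forall>i<length es. inc (es ! i) = {vs ! i, vs ! Suc i}"
    "W = set vs" "F = set es"
  using assms unfolding is_path_def by blast

lemma is_path_verts:
  assumes "is_path inc W F x y"
  shows "W = verts inc F"
proof -
  obtain vs es where p: "es \<noteq> []" "length vs = length es + 1"
    "\<forall>i<length es. inc (es ! i) = {vs ! i, vs ! Suc i}" "W = set vs" "F = set es"
    using assms by (rule is_pathE)
  have "verts inc F \<subseteq> W"
  proof
    fix v assume "v \<in> verts inc F"
    then obtain i where "i < length es" "v \<in> inc (es ! i)" using p(5) by (auto simp: verts_iff in_set_conv_nth)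
    then show "v \<in> W" using p(2,3,4) by (auto intro!: nth_mem)
  qed
  moreover have "vs ! j \<in> verts inc F" if "j < length vs" for j
  proof (cases "j < length es")
    case True
    then have "vs ! j \<in> inc (es ! j)" using p(3) by auto
    then show ?thesis using True p(5) by (auto simp: verts_iff)
  next
    case False
    then have "j = length es" using that p(2) by simp
    then have "j = Suc (j - 1)" "j - 1 < length es" using p(1) by (cases es; simp)+
    then have "vs ! j \<in> inc (es ! (j - 1))" using p(3) by (metis insertCI)
    then show ?thesis using \<open>j - 1 < length es\<close> p(5) by (auto simp: verts_iff)
  qed
  ultimately show ?thesis using p(4) by (auto simp: in_set_conv_nth)
qed

lemma is_path_card: "is_path inc W F x y \<Longrightarrow> card W = card F + 1"
  by (erule is_pathE) (simp add: distinct_card)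

lemma is_path_finite: "is_path inc W F x y \<Longrightarrow> finite W \<and> finite F"
  by (erule is_pathE) simp

lemma is_path_ends: "is_path inc W F x y \<Longrightarrow> x \<in> W \<and> y \<in> W \<and> x \<noteq> y"
proof (erule is_pathE)
  fix vs es
  assume "length vs = length es + 1" "x \<noteq> y" "hd vs = x" "last vs = y" "W = set vs" "F = set es"
  moreover have "vs \<noteq> []" using calculation(1) by auto
  ultimately show ?thesis by auto
qed

lemma card_eq_card_indices:
  assumes "distinct es" "B \<subseteq> set es"
  shows "card B = card {i. i < length es \<and> es ! i \<in> B}"
proof -
  have "B = (\<lambda>i. es ! i) ` {i. i < length es \<and> es ! i \<in> B}"
  proof
    show "B \<subseteq> (\<lambda>i. es ! i) ` {i. i < length es \<and> es ! i \<in> B}"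
      using assms(2) by (force simp: in_set_conv_nth)
  qed auto
  moreover have "inj_on (\<lambda>i. es ! i) {i. i < length es \<and> es ! i \<in> B}"
    using assms(1) by (auto simp: inj_on_def nth_eq_iff_index_eq)
  ultimately show ?thesis by (metis card_image)
qed

text \<open>Each edge of B is charged to its end nearer to the start x; this end is never y.\<close>
lemma is_path_subset_card_le:
  assumes "is_path inc W F x y" "B \<subseteq> F"
  shows "card B \<le> card (verts inc B - {y})"
proof -
  obtain vs es where p: "length vs = length es + 1" "distinct vs" "distinct es"
    "last vs = y" "\<forall>i<length es. inc (es ! i) = {vs ! i, vs ! Suc i}" "W = set vs" "F = set es"
    using assms(1) by (rule is_pathE)
  define I where "I = {i. i < length es \<and> es ! i \<in> B}"
  have "vs \<noteq> []" using p(1) by auto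
  then have y: "y = vs ! length es" using p(1,4) by (simp add: last_conv_nth)
  have "vs ! i \<in> verts inc B - {y}" if "i \<in> I" for i
  proof -
    have "vs ! i \<in> inc (es ! i)" "es ! i \<in> B" using that p(5) by (auto simp: I_def)
    moreover have "vs ! i \<noteq> y" using that p(1,2) y by (auto simp: I_def nth_eq_iff_index_eq)
    ultimately show ?thesis by (auto simp: verts_iff)
  qed
  then have "(\<lambda>i. vs ! i) ` I \<subseteq> verts inc B - {y}" by blast
  moreover have "inj_on (\<lambda>i. vs ! i) I"
    using p(1,2) by (auto simp: I_def inj_on_def nth_eq_iff_index_eq)
  moreover have "finite (verts inc B - {y})"
    using verts_mono[OF assms(2), of inc] is_path_verts[OF assms(1)] p(6)
    by (metis List.finite_set finite_Diff finite_subset)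
  ultimately have "card I \<le> card (verts inc B - {y})"
    by (metis card_image card_mono)
  then show ?thesis using card_eq_card_indices[OF p(3)] assms(2) p(7) by (simp add: I_def)
qed

text \<open>An edge not in B splits the path; charging the edges of B before it to their end nearer
  to y and those after it to their end nearer to x avoids both x and y.\<close>
lemma is_path_proper_subset_card_le:
  assumes "is_path inc W F x y" "B \<subset> F"
  shows "card B \<le> card (verts inc B - {x, y})"
proof -
  obtain vs es where p: "es \<noteq> []" "length vs = length es + 1" "distinct vs" "distinct es"
    "hd vs = x" "last vs = y" "\<forall>i<length es. inc (es ! i) = {vs ! i, vs ! Suc i}"
    "W = set vs" "F = set es"
    using assms(1) by (rule is_pathE)
  define m where "m = length es"
  define I where "I = {i. i < m \<and> es ! i \<in> B}"
  obtain e where "e \<in> set es" "e \<notin> B" using assms(2) p(9) by blast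
  then obtain j where j: "j < m" "es ! j \<notin> B" unfolding m_def by (auto simp: in_set_conv_nth)
  define g where "g i = vs ! (if i < j then Suc i else i)" for i
  have "vs \<noteq> []" using p(2) by auto
  then have x: "x = vs ! 0" and y: "y = vs ! m"
    using p(2,5,6) by (auto simp: hd_conv_nth last_conv_nth m_def)
  have idx: "0 < (if i < j then Suc i else i) \<and> (if i < j then Suc i else i) < m" if "i \<in> I" for i
  proof -
    have "i \<noteq> j" using that j by (auto simp: I_def)
    then show ?thesis using that j by (auto simp: I_def)
  qed
  have "g ` I \<subseteq> verts inc B - {x, y}"
  proof
    fix v assume "v \<in> g ` I"
    then obtain i where i: "i \<in> I" "v = g i" by blast
    then have "v \<in> inc (es ! i)" "es ! i \<in> B" using p(7) by (auto simp: I_def m_def g_def)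
    moreover have "v \<noteq> x" "v \<noteq> y"
      using idx[OF i(1)] p(2,3) x y i(2) by (auto simp: g_def m_def nth_eq_iff_index_eq)
    ultimately show "v \<in> verts inc B - {x, y}" by (auto simp: verts_iff)
  qed
  moreover have "inj_on g I"
  proof
    fix i i' assume ii: "i \<in> I" "i' \<in> I" "g i = g i'"
    moreover have "(if i < j then Suc i else i) < length vs" "(if i' < j then Suc i' else i') < length vs"
      using idx[OF ii(1)] idx[OF ii(2)] p(2) by (auto simp: m_def)
    ultimately have "(if i < j then Suc i else i) = (if i' < j then Suc i' else i')"
      using p(3) by (simp add: g_def nth_eq_iff_index_eq)
    moreover have "i \<noteq> j" "i' \<noteq> j" using ii j by (auto simp: I_def)
    ultimately show "i = i'" by (auto split: if_splits)
  qed
  moreover have "finite (verts inc B - {x, y})"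
    using verts_mono[of B F inc] assms(2) is_path_verts[OF assms(1)] p(8)
    by (metis List.finite_set finite_Diff finite_subset psubset_imp_subset)
  ultimately have "card I \<le> card (verts inc B - {x, y})"
    by (metis card_image card_mono)
  then show ?thesis
    using card_eq_card_indices[OF p(4), of B] assms(2) p(9) by (simp add: I_def m_def)
qed

lemma is_path_single_edge: "inc e = {a, b} \<Longrightarrow> a \<noteq> b \<Longrightarrow> is_path inc {a, b} {e} a b"
  unfolding is_path_def
  by (intro conjI exI[of _ "[a, b]"] exI[of _ "[e]"]) (auto simp: nth_Cons split: nat.splits)

lemma is_path_snoc:
  assumes "is_path inc W F x c" "a \<notin> W" "e \<notin> F" "inc e = {c, a}"
  shows "is_path inc (insert a W) (insert e F) x a"
proof -
  obtain vs es where p: "x \<noteq> c" "es \<noteq> []" "length vs = length es + 1" "distinct vs" "distinct es"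
    "hd vs = x" "last vs = c" "\<forall>i<length es. inc (es ! i) = {vs ! i, vs ! Suc i}"
    "W = set vs" "F = set es"
    using assms(1) by (rule is_pathE)
  have vs: "vs \<noteq> []" using p(3) by auto
  have "\<forall>i<length (es @ [e]). inc ((es @ [e]) ! i) = {(vs @ [a]) ! i, (vs @ [a]) ! Suc i}"
    using p(3,7,8) assms(4) vs by (auto simp: nth_append last_conv_nth less_Suc_eq)
  moreover have "x \<noteq> a" using p(6,9) assms(2) hd_in_set[OF vs] by auto
  ultimately show ?thesis unfolding is_path_def
    by (intro conjI exI[of _ "vs @ [a]"] exI[of _ "es @ [e]"]) (use p assms vs in auto)
qed


subsection \<open>Cycles and bicycles\<close>

text \<open>Count degrees over the vertices of W outside V(D): if D had excess at least that of F,
  no edge outside D could touch V(D), and F would separate.\<close>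
lemma excess_proper_subset_less:
  assumes edges: "multigraph_edges inc F" and "finite W" and inc_W: "\<forall>e\<in>F. inc e \<subseteq> W"
    and insep: "inseparable inc {} F" and deg2: "\<forall>v\<in>W. 2 \<le> deg inc F v"
    and D: "D \<subset> F" "D \<noteq> {}"
  shows "excess inc D < int (card F) - int (card W)"
proof (rule ccontr)
  assume ex: "\<not> ?thesis"
  define N where "N = W - verts inc D"
  define R where "R = F - D"
  define T where "T = {e\<in>R. \<not> inc e \<subseteq> N}"
  have fF: "finite F" and fN: "finite N" and fR: "finite R"
    using edges \<open>finite W\<close> by (auto simp: N_def R_def multigraph_edges_finite)
  have edgesR: "multigraph_edges inc R" using multigraph_edges_subset[OF edges] R_def by blast
  have "verts inc D \<subseteq> W" using inc_W D(1) unfolding verts_def by blast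
  moreover have "finite (verts inc D)" using calculation \<open>finite W\<close> by (rule finite_subset)
  ultimately have "card W = card (verts inc D) + card N"
    using \<open>finite W\<close> by (simp add: N_def card_Diff_subset card_mono)
  moreover have "card F = card D + card R"
    using D(1) fF card_Un_disjoint[of D R] by (simp add: R_def Un_absorb1 finite_subset[of D F])
  ultimately have RN: "card R \<le> card N" using ex by (simp add: excess_def)
  have "2 * card N \<le> (\<Sum>v\<in>N. deg inc F v)"
    using sum_mono[of N "\<lambda>_. 2" "deg inc F"] deg2 by (simp add: N_def)
  also have "\<dots> = (\<Sum>e\<in>F. ends_in inc N e)" by (rule sum_deg[OF fF fN])
  also have "\<dots> = (\<Sum>e\<in>R. ends_in inc N e)"
  proof (rule sum.mono_neutral_right[OF fF])
    have "N \<inter> inc e = {}" if "e \<in> D" for e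
      using inc_subset_verts[OF that, of inc] by (auto simp: N_def)
    then show "\<forall>e\<in>F - R. ends_in inc N e = 0" by (auto simp: R_def ends_in_def)
  qed (auto simp: R_def)
  also have "\<dots> = (\<Sum>v\<in>N. deg inc R v)" by (rule sum_deg[OF fR fN, symmetric])
  also have "\<dots> = 2 * card {e\<in>R. inc e \<subseteq> N} + (\<Sum>e\<in>T. ends_in inc N e)"
    unfolding T_def by (rule sum_deg_split[OF edgesR fN])
  also have "\<dots> \<le> 2 * card {e\<in>R. inc e \<subseteq> N} + card T"
    using sum_bounded_above[of T "ends_in inc N" 1] ends_in_outside[OF edgesR] by (auto simp: T_def)
  finally have "2 * card N \<le> 2 * card {e\<in>R. inc e \<subseteq> N} + card T" .
  moreover have "card R = card {e\<in>R. inc e \<subseteq> N} + card T"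
  proof -
    have "R = {e\<in>R. inc e \<subseteq> N} \<union> T" "{e\<in>R. inc e \<subseteq> N} \<inter> T = {}" by (auto simp: T_def)
    then show ?thesis using fR by (metis card_Un_disjoint finite_Un)
  qed
  ultimately have "card T = 0" using RN by linarith
  then have "T = {}" using fR by (simp add: T_def)
  then have "verts inc R \<subseteq> N" unfolding T_def verts_def by blast
  then have "verts inc D \<inter> verts inc R = {}" unfolding N_def by blast
  then show False
    using inseparableD[OF insep, of D R] D by (auto simp: R_def)
qed

lemma card_edges_eq_if_2_regular:
  assumes "multigraph_edges inc F" "finite W" "\<forall>e\<in>F. inc e \<subseteq> W" "\<forall>v\<in>W. deg inc F v = 2"
  shows "card F = card W"
proof -
  have "2 * card W = (\<Sum>v\<in>W. deg inc F v)" using assms(4) by simp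
  also have "\<dots> = 2 * card F"
  proof -
    have A: "{e\<in>F. inc e \<subseteq> W} = F" and B: "{e\<in>F. \<not> inc e \<subseteq> W} = {}" using assms(3) by auto
    show ?thesis unfolding sum_deg_split[OF assms(1,2)] A B by simp
  qed
  finally show ?thesis by simp
qed

lemma is_cycle_props:
  assumes "multigraph_edges inc F" "is_cycle inc W F"
  shows "W = verts inc F" "card F = card W" "inseparable inc {} F" "finite W"
proof -
  have fg: "finite W" "\<forall>e\<in>F. inc e \<subseteq> W" and dg: "\<forall>v\<in>W. deg inc F v = 2"
    using assms(2) unfolding is_cycle_def finite_gr_def by auto
  have "finite F" using assms(1) multigraph_edges_finite by blast
  then have "W \<subseteq> verts inc F" using dg deg_pos_iff[of F inc] by force
  then show "W = verts inc F" using fg(2) unfolding verts_def by blast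
  show "card F = card W" by (rule card_edges_eq_if_2_regular[OF assms(1) fg dg])
  show "inseparable inc {} F"
    using connected_inseparable[OF assms(1) _ fg(2)] assms(2) unfolding is_cycle_def by blast
  show "finite W" by (rule fg(1))
qed

lemma is_cycle_proper_subset:
  assumes "multigraph_edges inc F" "is_cycle inc W F" "D \<subset> F" "D \<noteq> {}"
  shows "card D < card (verts inc D)"
proof -
  have "\<forall>e\<in>F. inc e \<subseteq> W" "\<forall>v\<in>W. 2 \<le> deg inc F v"
    using assms(2) unfolding is_cycle_def finite_gr_def by auto
  then have "excess inc D < int (card F) - int (card W)"
    using excess_proper_subset_less[OF assms(1) is_cycle_props(4)[OF assms(1,2)]]
      is_cycle_props(3)[OF assms(1,2)] assms(3,4) by blast
  then show ?thesis using is_cycle_props(2)[OF assms(1,2)] by (simp add: excess_def)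
qed

lemma is_bicycle_props:
  assumes "multigraph_edges inc F" "is_bicycle inc W F"
  shows "W = verts inc F" "\<forall>v\<in>W. 2 \<le> deg inc F v" "inseparable inc {} F" "finite W"
    "int (card F) - int (card W) = 1"
proof -
  have fg: "finite W" "\<forall>e\<in>F. inc e \<subseteq> W" and cn: "connected_gr inc W F"
    and cd: "int (card F) - int (card W) = 1" and nl: "\<forall>v\<in>W. \<not> is_leaf inc F v"
    using assms(2) unfolding is_bicycle_def finite_gr_def by auto
  have fF: "finite F" using assms(1) multigraph_edges_finite by blast
  have inV: "v \<in> verts inc F" if v: "v \<in> W" for v
  proof (cases "W = {v}")
    case True
    then have "F \<noteq> {}" using cd by auto
    then obtain e where e: "e \<in> F" by blast
    then have "inc e = {v}" using fg(2) True inc_nonempty[OF assms(1) e] by blast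
    then show ?thesis using e by (auto simp: verts_iff)
  qed (use connected_gr_in_verts[OF cn v] v in blast)
  then show "W = verts inc F" using fg(2) unfolding verts_def by blast
  show "\<forall>v\<in>W. 2 \<le> deg inc F v"
  proof
    fix v assume v: "v \<in> W"
    let ?S = "{e\<in>F. v \<in> inc e}"
    have "?S \<noteq> {}" using inV[OF v] by (auto simp: verts_iff)
    then have "card ?S \<noteq> 0" using fF by simp
    then consider "2 \<le> card ?S" | "card ?S = 1" by linarith
    then show "2 \<le> deg inc F v"
    proof cases
      case 1
      then show ?thesis using card_incident_le_deg[OF fF, of v inc] by linarith
    next
      case 2
      then obtain e where e: "?S = {e}" using card_1_singletonE by blast
      then have "is_loop inc e" using nl v unfolding is_leaf_def by blast
      then show ?thesis using deg_eq_end_mult[OF fF e] by (simp add: end_mult_def)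
    qed
  qed
  show "inseparable inc {} F" by (rule connected_inseparable[OF assms(1) cn fg(2)])
  show "finite W" "int (card F) - int (card W) = 1" by (fact fg(1) cd)+
qed

lemma is_bicycle_proper_subset:
  assumes "multigraph_edges inc F" "is_bicycle inc W F" "D \<subset> F"
  shows "card D \<le> card (verts inc D)"
proof (cases "D = {}")
  case False
  have "\<forall>e\<in>F. inc e \<subseteq> W" using assms(2) unfolding is_bicycle_def finite_gr_def by auto
  then have "excess inc D < int (card F) - int (card W)"
    using excess_proper_subset_less[OF assms(1) is_bicycle_props(4)[OF assms(1,2)]]
      is_bicycle_props(2,3)[OF assms(1,2)] assms(3) False by blast
  then show ?thesis using is_bicycle_props(5)[OF assms(1,2)] by (simp add: excess_def)
qed simp


subsection \<open>Ears\<close>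

definition ear :: "('e \<Rightarrow> 'v set) \<Rightarrow> 'v set \<Rightarrow> 'e set \<Rightarrow> bool" where
  "ear inc U F \<longleftrightarrow> card F = card (verts inc F - U) + 1 \<and> (\<forall>Q\<subset>F. card Q \<le> card (verts inc Q - U))"

definition ear_shape :: "('e \<Rightarrow> 'v set) \<Rightarrow> 'v set \<Rightarrow> 'v set \<Rightarrow> 'e set \<Rightarrow> bool" where
  "ear_shape inc U W F \<longleftrightarrow>
     (\<exists>x y. is_path inc W F x y \<and> U \<inter> W = {x, y}) \<or>
     (\<exists>x. is_lollipop inc W F x \<and> U \<inter> W = {x}) \<or>
     (is_cycle inc W F \<and> card (U \<inter> W) = 1) \<or>
     (is_bicycle inc W F \<and> U \<inter> W = {})"

lemma ear_if_path:
  assumes p: "is_path inc W F x y" and UW: "U \<inter> W = {x, y}"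
  shows "W = verts inc F \<and> ear inc U F"
proof -
  have W: "W = verts inc F" by (rule is_path_verts[OF p])
  have xy: "x \<in> W" "y \<in> W" "x \<noteq> y" and fW: "finite W"
    using is_path_ends[OF p] is_path_finite[OF p] by auto
  have "W - U = W - {x, y}" using UW by blast
  then have "card (W - U) = card W - 2" using xy fW by (simp add: card_Diff_subset)
  moreover have "card W = card F + 1" by (rule is_path_card[OF p])
  moreover have "2 \<le> card W" using xy fW by (metis card_2_iff card_mono empty_subsetI insert_subset)
  ultimately have "card F = card (verts inc F - U) + 1" using W by simp
  moreover have "card D \<le> card (verts inc D - U)" if "D \<subset> F" for D
  proof -
    have "verts inc D \<subseteq> W" using W verts_mono[of D F inc] that by blast
    then have "verts inc D - {x, y} = verts inc D - U" using UW by blast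
    then show ?thesis using is_path_proper_subset_card_le[OF p that] by simp
  qed
  ultimately show ?thesis using W by (simp add: ear_def)
qed

lemma ear_if_cycle:
  assumes edges: "multigraph_edges inc F" and c: "is_cycle inc W F" and UW: "card (U \<inter> W) = 1"
  shows "W = verts inc F \<and> ear inc U F"
proof -
  note W = is_cycle_props(1)[OF edges c] and fW = is_cycle_props(4)[OF edges c]
  have "card (W - U) + 1 = card W"
    using UW fW card_Diff_subset_Int[of W U] card_mono[OF fW, of "W \<inter> U"]
    by (simp add: Int_commute)
  then have "card F = card (verts inc F - U) + 1"
    using is_cycle_props(2)[OF edges c] W by simp
  moreover have "card D \<le> card (verts inc D - U)" if "D \<subset> F" for D
  proof (cases "D = {}")
    case False
    have "verts inc D \<subseteq> W" using W verts_mono[of D F inc] that by blast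
    then have "card (verts inc D \<inter> U) \<le> 1"
      using UW fW card_mono[of "W \<inter> U" "verts inc D \<inter> U"] by (auto simp: Int_commute)
    moreover have "finite (verts inc D)" using \<open>verts inc D \<subseteq> W\<close> fW by (rule finite_subset)
    ultimately show ?thesis
      using is_cycle_proper_subset[OF edges c that False] card_Diff_subset_Int[of "verts inc D" U]
      by simp
  qed simp
  ultimately show ?thesis using W by (simp add: ear_def)
qed

lemma ear_if_bicycle:
  assumes edges: "multigraph_edges inc F" and b: "is_bicycle inc W F" and UW: "U \<inter> W = {}"
  shows "W = verts inc F \<and> ear inc U F"
proof -
  note W = is_bicycle_props(1)[OF edges b]
  have "verts inc D - U = verts inc D" if "D \<subseteq> F" for D
    using UW W verts_mono[OF that, of inc] by blast
  then show ?thesis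
    using W is_bicycle_props(5)[OF edges b] is_bicycle_proper_subset[OF edges b]
    by (auto simp: ear_def)
qed


lemma lollipop_proper_subset_card_le:
  assumes edges1: "multigraph_edges inc F1" and c: "is_cycle inc W1 F1" and p: "is_path inc W2 F2 y x"
    and W12: "W1 \<inter> W2 = {y}" and F12: "F1 \<inter> F2 = {}" and D: "D \<subset> F1 \<union> F2"
  shows "card D \<le> card (verts inc D - {x})"
proof -
  note W1 = is_cycle_props(1)[OF edges1 c] and fW1 = is_cycle_props(4)[OF edges1 c]
  have W2: "W2 = verts inc F2" by (rule is_path_verts[OF p])
  have yx: "y \<in> W2" "x \<in> W2" "y \<noteq> x" and fW2: "finite W2" and fF2: "finite F2"
    using is_path_ends[OF p] is_path_finite[OF p] by auto
  have fF1: "finite F1" using edges1 multigraph_edges_finite by blast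
  have xW1: "x \<notin> W1" using W12 yx by (metis IntI singletonD)
  define A where "A = D \<inter> F1"
  define B where "B = D \<inter> F2"
  have fA: "finite A" and fB: "finite B" using fF1 fF2 by (auto simp: A_def B_def)
  have DAB: "D = A \<union> B" using D by (auto simp: A_def B_def)
  moreover have "A \<inter> B = {}" using F12 by (auto simp: A_def B_def)
  ultimately have cD: "card D = card A + card B" using card_Un_disjoint[OF fA fB] by simp
  have vA: "verts inc A \<subseteq> W1" and vB: "verts inc B \<subseteq> W2"
    using W1 W2 verts_mono[of A F1 inc] verts_mono[of B F2 inc] by (auto simp: A_def B_def)
  have vD: "verts inc D - {x} = verts inc A \<union> (verts inc B - {x})"
    using DAB vA xW1 by (auto simp: verts_Un)
  have fvA: "finite (verts inc A)" and fvB: "finite (verts inc B - {x})"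
    using vA vB fW1 fW2 by (auto intro: finite_subset)
  show ?thesis
  proof (cases "A = F1")
    case True
    then have "B \<subset> F2" using D by (auto simp: A_def B_def)
    then have "card B \<le> card (verts inc B - {y, x})" by (rule is_path_proper_subset_card_le[OF p])
    moreover have "card A = card W1" using True W1 is_cycle_props(2)[OF edges1 c] by simp
    moreover have "card (W1 \<union> (verts inc B - {y, x})) \<le> card (verts inc D - {x})"
      using vD True W1 fvA fvB by (intro card_mono) auto
    moreover have "W1 \<inter> (verts inc B - {y, x}) = {}" using vB W12 by blast
    then have "card (W1 \<union> (verts inc B - {y, x})) = card W1 + card (verts inc B - {y, x})"
      using fW1 fvB by (intro card_Un_disjoint) auto
    ultimately show ?thesis using cD by simp
  next
    case False
    have cB: "card B \<le> card (verts inc B - {x})"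
      using is_path_subset_card_le[OF p] by (simp add: B_def)
    have cU: "card (verts inc D - {x}) + card (verts inc A \<inter> (verts inc B - {x})) =
              card (verts inc A) + card (verts inc B - {x})"
      using card_Un_Int[OF fvA fvB] vD by simp
    show ?thesis
    proof (cases "A = {}")
      case False
      have "A \<subset> F1" using \<open>A \<noteq> F1\<close> by (auto simp: A_def)
      then have "card A < card (verts inc A)" by (rule is_cycle_proper_subset[OF edges1 c _ False])
      moreover have "card (verts inc A \<inter> (verts inc B - {x})) \<le> card {y}"
        using vA vB W12 by (intro card_mono) auto
      ultimately show ?thesis using cU cB cD by simp
    qed (use cU cB cD in simp)
  qed
qed

lemma ear_if_lollipop:
  assumes edges: "multigraph_edges inc F" and l: "is_lollipop inc W F x" and UW: "U \<inter> W = {x}"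
  shows "W = verts inc F \<and> ear inc U F"
proof -
  obtain W1 F1 W2 F2 y where c: "is_cycle inc W1 F1" and p: "is_path inc W2 F2 y x"
    and W12: "W1 \<inter> W2 = {y}" and F12: "F1 \<inter> F2 = {}" and WF: "W = W1 \<union> W2" "F = F1 \<union> F2"
    using l unfolding is_lollipop_def by blast
  have edges1: "multigraph_edges inc F1" using multigraph_edges_subset[OF edges] WF(2) by blast
  have fF1: "finite F1" using edges1 multigraph_edges_finite by blast
  have fW1: "finite W1" by (rule is_cycle_props(4)[OF edges1 c])
  have x: "x \<in> W2" and fW2: "finite W2" and fF2: "finite F2"
    using is_path_ends[OF p] is_path_finite[OF p] by auto
  have W: "W = verts inc F"
    using WF is_cycle_props(1)[OF edges1 c] is_path_verts[OF p] by (simp add: verts_Un)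
  have "card W + 1 = card W1 + card W2"
    using card_Un_Int[OF fW1 fW2] W12 WF(1) by simp
  moreover have "card F = card F1 + card F2" using card_Un_disjoint[OF fF1 fF2 F12] WF(2) by simp
  moreover have "card (W - U) + 1 = card W"
  proof -
    have "W - U = W - {x}" "x \<in> W" "finite W" using UW x WF(1) fW1 fW2 by auto
    then show ?thesis by (metis card_Suc_Diff1 Suc_eq_plus1)
  qed
  ultimately have "card F = card (verts inc F - U) + 1"
    using W is_cycle_props(2)[OF edges1 c] is_path_card[OF p] by simp
  moreover have "card D \<le> card (verts inc D - U)" if D: "D \<subset> F" for D
  proof -
    have "verts inc D \<subseteq> W" using W verts_mono[of D F inc] D by blast
    then have "verts inc D - U = verts inc D - {x}" using UW by blast
    then show ?thesis
      using lollipop_proper_subset_card_le[OF edges1 c p W12 F12] D WF(2) by simp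
  qed
  ultimately show ?thesis using W by (simp add: ear_def)
qed

lemma ear_shape_imp_ear:
  "multigraph_edges inc F \<Longrightarrow> ear_shape inc U W F \<Longrightarrow> W = verts inc F \<and> ear inc U F"
  unfolding ear_shape_def
  by (elim disjE exE conjE) (simp_all add: ear_if_path ear_if_lollipop ear_if_cycle ear_if_bicycle)


subsection \<open>Recognising paths and lollipops by their degrees\<close>

lemma remove_pendant_edge:
  assumes "multigraph_edges inc F" "e \<in> F" "inc e = {a, c}" "{f\<in>F. a \<in> inc f} = {e}"
    "end_mult inc e = 1"
  shows "a \<notin> verts inc (F - {e})" and "verts inc F = {a, c} \<union> verts inc (F - {e})"
    and "deg inc (F - {e}) c + 1 = deg inc F c"
    and "v \<notin> inc e \<Longrightarrow> deg inc (F - {e}) v = deg inc F v"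
    and "w \<in> verts inc (F - {e}) - {c} \<Longrightarrow> w \<in> verts inc F - {a, c} \<and> deg inc (F - {e}) w = deg inc F w"
proof -
  have fF: "finite F" using assms(1) multigraph_edges_finite by blast
  show "a \<notin> verts inc (F - {e})" using assms(4) by (auto simp: verts_iff)
  show "verts inc F = {a, c} \<union> verts inc (F - {e})"
    using assms(2,3) verts_insert[of inc e "F - {e}"] by (simp add: insert_absorb)
  show "deg inc (F - {e}) c + 1 = deg inc F c"
    using deg_Diff_edge[OF fF assms(2), of inc c] assms(3,5) by simp
  show "v \<notin> inc e \<Longrightarrow> deg inc (F - {e}) v = deg inc F v" for v
    using deg_Diff_edge[OF fF assms(2), of inc v] by simp
  then show "w \<in> verts inc (F - {e}) - {c} \<Longrightarrow> w \<in> verts inc F - {a, c} \<and> deg inc (F - {e}) w = deg inc F w"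
    using \<open>a \<notin> verts inc (F - {e})\<close> \<open>verts inc F = {a, c} \<union> verts inc (F - {e})\<close> assms(3)
    by (metis DiffD1 DiffD2 DiffI Un_iff insertE)
qed

lemma inseparable_remove_pendant_edge:
  assumes insep: "inseparable inc {} F" and e: "e \<in> F" "inc e = {a, c}"
    and a: "a \<notin> verts inc (F - {e})" and c: "c \<in> verts inc (F - {e})"
  shows "inseparable inc {} (F - {e})"
  unfolding inseparable_def
proof
  assume "\<exists>Q R. Q \<union> R = F - {e} \<and> Q \<inter> R = {} \<and> Q \<noteq> {} \<and> R \<noteq> {} \<and> verts inc Q \<inter> verts inc R \<subseteq> {}"
  then obtain Q R where s: "Q \<union> R = F - {e}" "Q \<inter> R = {}" "Q \<noteq> {}" "R \<noteq> {}"
    "verts inc Q \<inter> verts inc R = {}" by blast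
  have vQR: "verts inc Q \<union> verts inc R = verts inc (F - {e})" using s(1) verts_Un[of inc Q R] by simp
  then consider "c \<in> verts inc Q" | "c \<in> verts inc R" using c by blast
  then show False
  proof cases
    case 1
    then have "verts inc (insert e Q) \<inter> verts inc R \<subseteq> {}"
      using s(5) a vQR e(2) by (auto simp: verts_insert)
    then show False using inseparableD[OF insep, of "insert e Q" R] s e by blast
  next
    case 2
    then have "verts inc Q \<inter> verts inc (insert e R) \<subseteq> {}"
      using s(5) a vQR e(2) by (auto simp: verts_insert)
    then show False using inseparableD[OF insep, of Q "insert e R"] s e by blast
  qed
qed

lemma is_path_if_degrees:
  assumes "multigraph_edges inc F" "a \<noteq> b" "deg inc F a = 1" "deg inc F b = 1"
    "\<forall>v\<in>verts inc F - {a, b}. deg inc F v = 2" "inseparable inc {} F"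
  shows "is_path inc (verts inc F) F b a"
  using assms
proof (induction "card F" arbitrary: F a rule: less_induct)
  case less
  have fF: "finite F" using less.prems(1) multigraph_edges_finite by blast
  obtain e c where ec: "e \<in> F" "inc e = {a, c}" "a \<noteq> c" "{f\<in>F. a \<in> inc f} = {e}" "end_mult inc e = 1"
    using pendant_edge[OF less.prems(1,3)] by blast
  note pend = remove_pendant_edge[OF less.prems(1) ec(1,2,4,5)]
  define F' where "F' = F - {e}"
  show ?case
  proof (cases "c = b")
    case True
    obtain eb where "{f\<in>F. b \<in> inc f} = {eb}"
      using pendant_edge[OF less.prems(1,4)] by metis
    moreover have "e \<in> {f\<in>F. b \<in> inc f}" using ec(1,2) True by simp
    ultimately have "{f\<in>F. b \<in> inc f} = {e}" by simp
    then have "b \<notin> verts inc F'" by (auto simp: F'_def verts_iff)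
    then have "verts inc {e} \<inter> verts inc F' \<subseteq> {}" using pend(1) ec(2) True by (auto simp: F'_def verts_insert)
    then have "F = {e}" using inseparableD[OF less.prems(6), of "{e}" F'] ec(1) by (auto simp: F'_def)
    moreover have "is_path inc {b, a} {e} b a"
      using is_path_single_edge[of inc e b a] ec(2,3) True by (simp add: insert_commute)
    ultimately show ?thesis using ec(2) True by (simp add: verts_insert insert_commute)
  next
    case False
    have "deg inc F c = 2" using less.prems(5) pend(2) ec(3) False by auto
    then have dc: "deg inc F' c = 1" using pend(3) by (simp add: F'_def)
    then have c: "c \<in> verts inc F'" using fF deg_pos_iff[of F' inc c] by (simp add: F'_def)
    have "b \<notin> inc e" using ec(2) False less.prems(2) by auto
    then have db: "deg inc F' b = 1" using pend(4) less.prems(4) by (simp add: F'_def)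
    have "\<forall>v\<in>verts inc F' - {c, b}. deg inc F' v = 2"
      using less.prems(5) pend(5) by (force simp: F'_def)
    moreover have "card F' < card F" using card_Diff1_less[OF fF ec(1)] by (simp add: F'_def)
    moreover have "multigraph_edges inc F'"
      using multigraph_edges_subset[OF less.prems(1)] by (simp add: F'_def)
    moreover have "inseparable inc {} F'"
      using inseparable_remove_pendant_edge[OF less.prems(6) ec(1,2) pend(1)] c by (simp add: F'_def)
    ultimately have "is_path inc (verts inc F') F' b c"
      using less.hyps False dc db by blast
    then have "is_path inc (insert a (verts inc F')) (insert e F') b a"
      using is_path_snoc[of inc "verts inc F'" F' b c a e] pend(1) ec(2)
      by (simp add: F'_def insert_commute)
    moreover have "insert e F' = F" using ec(1) by (auto simp: F'_def)
    moreover have "insert a (verts inc F') = verts inc F" using pend(2) c by (auto simp: F'_def)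
    ultimately show ?thesis by simp
  qed
qed


lemma is_lollipop_if_degrees:
  assumes "multigraph_edges inc F" "y \<noteq> a" "deg inc F a = 1" "deg inc F y = 3"
    "\<forall>v\<in>verts inc F - {a, y}. deg inc F v = 2" "inseparable inc {} F"
  shows "is_lollipop inc (verts inc F) F a"
  using assms
proof (induction "card F" arbitrary: F a rule: less_induct)
  case less
  have fF: "finite F" using less.prems(1) multigraph_edges_finite by blast
  obtain e c where ec: "e \<in> F" "inc e = {a, c}" "a \<noteq> c" "{f\<in>F. a \<in> inc f} = {e}" "end_mult inc e = 1"
    using pendant_edge[OF less.prems(1,3)] by blast
  note pend = remove_pendant_edge[OF less.prems(1) ec(1,2,4,5)]
  define F' where "F' = F - {e}"
  have edges': "multigraph_edges inc F'"
    using multigraph_edges_subset[OF less.prems(1)] by (simp add: F'_def)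
  have F: "F = F' \<union> {e}" "F' \<inter> {e} = {}" using ec(1) by (auto simp: F'_def)
  have deg_c: "deg inc F' c + 1 = deg inc F c" using pend(3) by (simp add: F'_def)
  show ?case
  proof (cases "c = y")
    case True
    then have "c \<in> verts inc F'" using deg_c less.prems(4) fF deg_pos_iff[of F' inc c] by (simp add: F'_def)
    have "deg inc F' v = 2" if "v \<in> verts inc F'" for v
      using that True deg_c less.prems(4,5) pend(5) by (cases "v = c") (force simp: F'_def)+
    moreover have "connected_gr inc (verts inc F') F'"
    proof (rule inseparable_connected[OF edges'])
      show "F' \<noteq> {}" using \<open>c \<in> verts inc F'\<close> by auto
      show "inseparable inc {} F'"
        using inseparable_remove_pendant_edge[OF less.prems(6) ec(1,2) pend(1)] \<open>c \<in> verts inc F'\<close>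
        by (simp add: F'_def)
    qed
    ultimately have "is_cycle inc (verts inc F') F'"
      using finite_verts[OF edges'] edges' inc_subset_verts[of _ F' inc]
      by (auto simp: is_cycle_def finite_gr_def multigraph_edges_finite)
    moreover have "is_path inc {y, a} {e} y a"
      using is_path_single_edge[of inc e y a] ec(2,3) True by (simp add: insert_commute)
    moreover have "verts inc F' \<inter> {y, a} = {y}" using pend(1) True \<open>c \<in> verts inc F'\<close> by (auto simp: F'_def)
    moreover have "verts inc F = verts inc F' \<union> {y, a}" using pend(2) True by (auto simp: F'_def)
    ultimately show ?thesis unfolding is_lollipop_def using F by blast
  next
    case False
    have "deg inc F c = 2" using less.prems(5) pend(2) ec(3) False by auto
    then have dc: "deg inc F' c = 1" using deg_c by simp
    then have c: "c \<in> verts inc F'" using fF deg_pos_iff[of F' inc c] by (simp add: F'_def)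
    have "y \<notin> inc e" using ec(2) False less.prems(2) by auto
    then have "deg inc F' y = 3" using pend(4) less.prems(4) by (simp add: F'_def)
    moreover have "\<forall>v\<in>verts inc F' - {c, y}. deg inc F' v = 2"
      using less.prems(5) pend(5) by (force simp: F'_def)
    moreover have "card F' < card F" using card_Diff1_less[OF fF ec(1)] by (simp add: F'_def)
    moreover have "inseparable inc {} F'"
      using inseparable_remove_pendant_edge[OF less.prems(6) ec(1,2) pend(1)] c by (simp add: F'_def)
    ultimately have "is_lollipop inc (verts inc F') F' c"
      using less.hyps False dc edges' by (metis (no_types, lifting))
    then obtain W1 F1 W2 F2 y' where l: "is_cycle inc W1 F1" "is_path inc W2 F2 y' c"
      "W1 \<inter> W2 = {y'}" "F1 \<inter> F2 = {}" "verts inc F' = W1 \<union> W2" "F' = F1 \<union> F2"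
      unfolding is_lollipop_def by blast
    have a: "a \<notin> W1 \<union> W2" "e \<notin> F1 \<union> F2" using pend(1) l(5,6) by (auto simp: F'_def)
    then have "is_path inc (insert a W2) (insert e F2) y' a"
      using is_path_snoc[OF l(2)] ec(2) by (simp add: insert_commute)
    moreover have "W1 \<inter> insert a W2 = {y'}" "F1 \<inter> insert e F2 = {}" using l(3,4) a by auto
    moreover have "verts inc F = W1 \<union> insert a W2" using pend(2) c l(5) by (auto simp: F'_def)
    moreover have "F = F1 \<union> insert e F2" using F l(6) by auto
    ultimately show ?thesis unfolding is_lollipop_def using l(1) by blast
  qed
qed


subsection \<open>The shape of an ear\<close>

lemma sum_minus_2:
  assumes "\<forall>v\<in>N. 2 \<le> (f v :: nat)"
  shows "sum f N = (\<Sum>v\<in>N. f v - 2) + 2 * card N"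
proof -
  have "sum f N = (\<Sum>v\<in>N. (f v - 2) + 2)" using assms by (intro sum.cong) auto
  also have "\<dots> = (\<Sum>v\<in>N. f v - 2) + (\<Sum>v\<in>N. 2)" by (rule sum.distrib)
  finally show ?thesis by simp
qed

lemma sum_ge_2_eq_double_card:
  assumes "finite N" "\<forall>v\<in>N. 2 \<le> (f v :: nat)" "sum f N = 2 * card N"
  shows "\<forall>v\<in>N. f v = 2"
proof -
  have "(\<Sum>v\<in>N. f v - 2) = 0" using sum_minus_2[OF assms(2)] assms(3) by simp
  then have "\<forall>v\<in>N. f v - 2 = 0" using assms(1) by simp
  then show ?thesis using assms(2) by (metis diff_is_0_eq le_antisym)
qed

lemma sum_ge_2_eq_Suc_double_card:
  assumes "finite N" "\<forall>v\<in>N. 2 \<le> (f v :: nat)" "sum f N = 2 * card N + 1"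
  obtains y where "y \<in> N" "f y = 3" "\<forall>v\<in>N - {y}. f v = 2"
proof -
  have sum1: "(\<Sum>v\<in>N. f v - 2) = 1" using sum_minus_2[OF assms(2)] assms(3) by simp
  then obtain y where y: "y \<in> N" "f y - 2 \<noteq> 0" by (metis sum.neutral zero_neq_one)
  have "(f y - 2) + (\<Sum>v\<in>N - {y}. f v - 2) = 1" using sum1 sum.remove[OF assms(1) y(1), of "\<lambda>v. f v - 2"] by simp
  then have "f y - 2 = 1" "(\<Sum>v\<in>N - {y}. f v - 2) = 0" using y(2) by linarith+
  then have "f y - 2 = 1" "\<forall>v\<in>N - {y}. f v - 2 = 0" using assms(1) by simp_all
  moreover have "2 \<le> f y" "\<forall>v\<in>N - {y}. 2 \<le> f v" using assms(2) y(1) by auto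
  ultimately have "f y = 3" "\<forall>v\<in>N - {y}. f v = 2" by (auto simp: le_antisym)
  then show ?thesis using that y(1) by blast
qed

locale ear_graph =
  fixes inc :: "'e \<Rightarrow> 'v set" and U :: "'v set" and F :: "'e set"
  assumes edges: "multigraph_edges inc F" and ear: "ear inc U F"
begin

definition inner :: "'v set" where "inner = verts inc F - U"

definition boundary :: "'e set" where "boundary = {e\<in>F. \<not> inc e \<subseteq> inner}"

lemma finite_F: "finite F"
  using edges multigraph_edges_finite by blast

lemma finite_inner: "finite inner"
  using finite_verts[OF edges] by (simp add: inner_def)

lemma finite_boundary: "finite boundary"
  using finite_F by (simp add: boundary_def)

lemma card_F: "card F = card inner + 1"
  using ear by (simp add: ear_def inner_def)

lemma card_proper_subset: "Q \<subset> F \<Longrightarrow> card Q \<le> card (verts inc Q - U)"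
  using ear by (simp add: ear_def)

lemma boundary_if_not_inner: "e \<in> F \<Longrightarrow> v \<in> inc e \<Longrightarrow> v \<notin> inner \<Longrightarrow> e \<in> boundary"
  by (auto simp: boundary_def)

text \<open>Otherwise removing the only edge at v would lose just one edge and one inner vertex.\<close>
lemma two_le_card_incident:
  assumes v: "v \<in> inner"
  shows "2 \<le> card {e\<in>F. v \<in> inc e}"
proof (rule ccontr)
  assume "\<not> ?thesis"
  then have "card {f\<in>F. v \<in> inc f} \<le> Suc 0" by simp
  moreover obtain e where e: "e \<in> F" "v \<in> inc e" using v by (auto simp: inner_def verts_iff)
  ultimately have S: "{f\<in>F. v \<in> inc f} = {e}"
    using finite_F by (subst (asm) card_le_Suc0_iff_eq) auto
  have "card (F - {e}) \<le> card (verts inc (F - {e}) - U)"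
    using card_proper_subset e(1) by blast
  also have "\<dots> \<le> card (inner - {v})"
    using S finite_inner verts_mono[of "F - {e}" F inc]
    by (intro card_mono) (auto simp: inner_def verts_iff)
  finally show False using card_F e(1) finite_F v finite_inner card_gt_0_iff[of inner] by auto
qed

lemma two_le_deg: "v \<in> inner \<Longrightarrow> 2 \<le> deg inc F v"
  using two_le_card_incident[of v] card_incident_le_deg[OF finite_F, of v inc] by linarith

text \<open>A separation of F sharing only vertices of U would split both F and the inner vertices.\<close>
lemma inseparable_attached: "inseparable inc U F"
  unfolding inseparable_def
proof
  assume "\<exists>Q R. Q \<union> R = F \<and> Q \<inter> R = {} \<and> Q \<noteq> {} \<and> R \<noteq> {} \<and> verts inc Q \<inter> verts inc R \<subseteq> U"
  then obtain Q R where s: "Q \<union> R = F" "Q \<inter> R = {}" "Q \<noteq> {}" "R \<noteq> {}"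
    "verts inc Q \<inter> verts inc R \<subseteq> U" by blast
  then have "Q \<subset> F" "R \<subset> F" by auto
  then have "card Q \<le> card (verts inc Q - U)" "card R \<le> card (verts inc R - U)"
    using card_proper_subset by blast+
  moreover have "inner = (verts inc Q - U) \<union> (verts inc R - U)"
    using s(1) verts_Un[of inc Q R] by (auto simp: inner_def)
  moreover have "(verts inc Q - U) \<inter> (verts inc R - U) = {}" using s(5) by auto
  moreover have "card F = card Q + card R"
    using s(1,2) finite_F by (metis card_Un_disjoint finite_Un)
  ultimately show False
    using card_F finite_inner card_Un_disjoint[of "verts inc Q - U" "verts inc R - U"] by auto
qed

lemma connected_gr_verts: "connected_gr inc (verts inc F) F"
proof (rule inseparable_connected[OF edges])
  show "F \<noteq> {}" using card_F by auto
  show "inseparable inc {} F" using inseparable_mono[OF inseparable_attached] by blast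
qed

lemma finite_gr_verts: "finite_gr inc (verts inc F) F"
  using finite_verts[OF edges] finite_F unfolding finite_gr_def verts_def by blast

lemma ends_in_boundary: "e \<in> boundary \<Longrightarrow> ends_in inc inner e \<le> 1"
  using ends_in_outside[OF edges] by (auto simp: boundary_def)

lemma sum_deg_inner:
  "(\<Sum>v\<in>inner. deg inc F v) + 2 * card boundary =
     2 * card inner + 2 + (\<Sum>e\<in>boundary. ends_in inc inner e)"
proof -
  have "card F = card {e\<in>F. inc e \<subseteq> inner} + card boundary"
    using finite_F card_Un_disjoint[of "{e\<in>F. inc e \<subseteq> inner}" boundary]
    by (simp add: boundary_def Un_def conj_disj_distribL[symmetric] Int_def)
  then show ?thesis
    using sum_deg_split[OF edges finite_inner] card_F by (simp add: boundary_def)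
qed

lemma card_boundary_le_2: "card boundary \<le> 2"
proof -
  have "2 * card inner \<le> (\<Sum>v\<in>inner. deg inc F v)"
    using sum_mono[of inner "\<lambda>_. 2" "deg inc F"] two_le_deg by simp
  moreover have "(\<Sum>e\<in>boundary. ends_in inc inner e) \<le> card boundary"
    using sum_bounded_above[of boundary "ends_in inc inner" 1] ends_in_boundary by simp
  ultimately show ?thesis using sum_deg_inner by linarith
qed


lemma boundary_edge_at_attachment:
  assumes "v \<in> verts inc F" "v \<in> U"
  obtains e where "e \<in> boundary" "v \<in> inc e"
  using assms by (auto simp: verts_iff boundary_def inner_def)

lemma ear_shape_if_no_boundary:
  assumes "boundary = {}"
  shows "ear_shape inc U (verts inc F) F"
proof -
  have "inc e \<subseteq> inner" if "e \<in> F" for e using assms that by (auto simp: boundary_def)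
  then have "verts inc F \<subseteq> inner" unfolding verts_def by blast
  then have inner: "inner = verts inc F" unfolding inner_def by blast
  have "\<not> is_leaf inc F v" if "v \<in> verts inc F" for v
    using two_le_card_incident[of v] that inner by (auto simp: is_leaf_def)
  then have "is_bicycle inc (verts inc F) F"
    using finite_gr_verts connected_gr_verts card_F inner by (simp add: is_bicycle_def)
  moreover have "U \<inter> verts inc F = {}" using inner unfolding inner_def by blast
  ultimately show ?thesis by (simp add: ear_shape_def)
qed

lemma ear_shape_if_closed_boundary_edge:
  assumes "boundary = {e0}" "ends_in inc inner e0 = 0"
  shows "ear_shape inc U (verts inc F) F"
proof -
  have e0: "e0 \<in> F" using assms(1) by (auto simp: boundary_def)
  have "inner \<inter> inc e0 = {}" using ends_in_eq_0[OF assms(2) finite_inc[OF edges e0]] .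
  then have "inc e0 \<subseteq> U" using inc_subset_verts[OF e0, of inc] by (auto simp: inner_def)
  then have "F = {e0}"
    using inseparableD[OF inseparable_attached, of "{e0}" "F - {e0}"] e0 by (auto simp: verts_insert)
  then have V: "verts inc F = inc e0" by (simp add: verts_insert)
  consider "card (inc e0) = 1" | "card (inc e0) = 2" using multigraph_edges_card[OF edges e0] by blast
  then show ?thesis
  proof cases
    case 1
    then obtain u where u: "inc e0 = {u}" by (rule card_1_singletonE)
    have "{e\<in>F. u \<in> inc e} = {e0}" using \<open>F = {e0}\<close> u by auto
    from deg_eq_end_mult[OF finite_F this] have "deg inc F u = 2"
      using 1 by (simp add: end_mult_def is_loop_def)
    then have "is_cycle inc (verts inc F) F"
      using finite_gr_verts V u connected_gr_singleton by (simp add: is_cycle_def)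
    moreover have "card (U \<inter> verts inc F) = 1" using V u \<open>inc e0 \<subseteq> U\<close> by simp
    ultimately show ?thesis by (simp add: ear_shape_def)
  next
    case 2
    then obtain p q where pq: "inc e0 = {p, q}" "p \<noteq> q" by (auto simp: card_2_iff)
    then have "is_path inc (verts inc F) F p q"
      using is_path_single_edge[of inc e0 p q] pq V \<open>F = {e0}\<close> by simp
    moreover have "U \<inter> verts inc F = {p, q}" using V pq \<open>inc e0 \<subseteq> U\<close> by auto
    ultimately show ?thesis by (auto simp: ear_shape_def)
  qed
qed

lemma ear_shape_if_pendant_boundary_edge:
  assumes "boundary = {e0}" "ends_in inc inner e0 = 1"
  shows "ear_shape inc U (verts inc F) F"
proof -
  have e0: "e0 \<in> F" using assms(1) by (auto simp: boundary_def)
  obtain u n where un: "inc e0 = {u, n}" "u \<noteq> n" "u \<notin> inner" "n \<in> inner"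
    using ends_in_eq_1[OF edges e0 assms(2)] by blast
  have uV: "u \<in> verts inc F" using un(1) e0 by (auto simp: verts_iff)
  have onlyu: "v = u" if v: "v \<in> verts inc F" "v \<in> U" for v
  proof -
    obtain e where "e \<in> boundary" "v \<in> inc e" by (rule boundary_edge_at_attachment[OF v])
    then show ?thesis using assms(1) un v by (auto simp: inner_def)
  qed
  have "{e\<in>F. u \<in> inc e} = {e0}"
  proof
    show "{e\<in>F. u \<in> inc e} \<subseteq> {e0}" using boundary_if_not_inner[of _ u] un(3) assms(1) by blast
  qed (use e0 un(1) in auto)
  from deg_eq_end_mult[OF finite_F this] have du: "deg inc F u = 1"
    using end_mult_eq_1[of inc e0] un(1,2) by simp
  have deg2: "\<forall>v\<in>inner. 2 \<le> deg inc F v" using two_le_deg by blast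
  have "(\<Sum>v\<in>inner. deg inc F v) = 2 * card inner + 1" using sum_deg_inner assms by simp
  then obtain y where y: "y \<in> inner" "deg inc F y = 3" "\<forall>v\<in>inner - {y}. deg inc F v = 2"
    by (rule sum_ge_2_eq_Suc_double_card[OF finite_inner deg2])
  have "\<forall>v\<in>verts inc F - {u, y}. deg inc F v = 2"
  proof
    fix v assume v: "v \<in> verts inc F - {u, y}"
    then have "v \<in> inner" using onlyu by (auto simp: inner_def)
    then show "deg inc F v = 2" using y(3) v by blast
  qed
  moreover have "y \<noteq> u" using y(1) un(3) by blast
  moreover have "inseparable inc {} F" using inseparable_mono[OF inseparable_attached] by blast
  ultimately have "is_lollipop inc (verts inc F) F u"
    using is_lollipop_if_degrees[OF edges _ du y(2)] by blast
  moreover have "U \<inter> verts inc F = {u}" using onlyu uV un(3) unfolding inner_def by blast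
  ultimately show ?thesis by (auto simp: ear_shape_def)
qed

lemma ear_shape_if_two_boundary_edges:
  assumes "card boundary = 2"
  shows "ear_shape inc U (verts inc F) F"
proof -
  obtain e1 e2 where T: "boundary = {e1, e2}" "e1 \<noteq> e2" using assms by (auto simp: card_2_iff)
  then have e12: "e1 \<in> F" "e2 \<in> F" by (auto simp: boundary_def)
  have "ends_in inc inner e1 \<le> 1" "ends_in inc inner e2 \<le> 1" using ends_in_boundary T by auto
  moreover have deg2: "\<forall>v\<in>inner. 2 \<le> deg inc F v" using two_le_deg by blast
  then have "2 * card inner \<le> (\<Sum>v\<in>inner. deg inc F v)"
    using sum_mono[of inner "\<lambda>_. 2" "deg inc F"] by simp
  moreover have "(\<Sum>v\<in>inner. deg inc F v) + 4 =
      2 * card inner + 2 + ends_in inc inner e1 + ends_in inc inner e2"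
    using sum_deg_inner T assms by simp
  ultimately have w: "ends_in inc inner e1 = 1" "ends_in inc inner e2 = 1"
    and "(\<Sum>v\<in>inner. deg inc F v) = 2 * card inner" by linarith+
  then have d2: "\<forall>v\<in>inner. deg inc F v = 2"
    using sum_ge_2_eq_double_card[OF finite_inner deg2] by blast
  obtain u1 n1 where un1: "inc e1 = {u1, n1}" "u1 \<noteq> n1" "u1 \<notin> inner" "n1 \<in> inner"
    using ends_in_eq_1[OF edges e12(1) w(1)] by blast
  obtain u2 n2 where un2: "inc e2 = {u2, n2}" "u2 \<noteq> n2" "u2 \<notin> inner" "n2 \<in> inner"
    using ends_in_eq_1[OF edges e12(2) w(2)] by blast
  have uV: "u1 \<in> verts inc F" "u2 \<in> verts inc F" using un1 un2 e12 by (auto simp: verts_iff)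
  have only: "v = u1 \<or> v = u2" if v: "v \<in> verts inc F" "v \<in> U" for v
  proof -
    obtain e where "e \<in> boundary" "v \<in> inc e" by (rule boundary_edge_at_attachment[OF v])
    then show ?thesis using T un1 un2 v by (auto simp: inner_def)
  qed
  have others: "\<forall>v\<in>verts inc F - {u1, u2}. deg inc F v = 2"
  proof
    fix v assume v: "v \<in> verts inc F - {u1, u2}"
    then have "v \<in> inner" using only by (auto simp: inner_def)
    then show "deg inc F v = 2" using d2 by blast
  qed
  have inc_u: "{e\<in>F. v \<in> inc e} \<subseteq> {e1, e2}" if "v \<notin> inner" for v
    using boundary_if_not_inner[of _ v] that T by blast
  have m: "end_mult inc e1 = 1" "end_mult inc e2 = 1"
    using end_mult_eq_1[of inc e1] end_mult_eq_1[of inc e2] un1(1,2) un2(1,2) by simp_all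
  show ?thesis
  proof (cases "u1 = u2")
    case True
    have "{e\<in>F. u1 \<in> inc e} = {e1, e2}" using inc_u[OF un1(3)] e12 un1(1) un2(1) True by auto
    from deg_eq_end_mult2[OF finite_F this T(2)] have "deg inc F u1 = 2" using m by simp
    then have "\<forall>v\<in>verts inc F. deg inc F v = 2" using others True by blast
    then have "is_cycle inc (verts inc F) F" using finite_gr_verts connected_gr_verts by (simp add: is_cycle_def)
    moreover have "U \<inter> verts inc F = {u1}" using only uV un1(3) True unfolding inner_def by blast
    ultimately show ?thesis by (simp add: ear_shape_def)
  next
    case False
    have "{e\<in>F. u1 \<in> inc e} = {e1}" "{e\<in>F. u2 \<in> inc e} = {e2}"
      using inc_u[OF un1(3)] inc_u[OF un2(3)] e12 un1 un2 False by auto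
    from deg_eq_end_mult[OF finite_F this(1)] deg_eq_end_mult[OF finite_F this(2)]
    have "deg inc F u1 = 1" "deg inc F u2 = 1" using m by simp_all
    moreover have "inseparable inc {} F" using inseparable_mono[OF inseparable_attached] by blast
    ultimately have "is_path inc (verts inc F) F u2 u1"
      using is_path_if_degrees[OF edges False] others by blast
    moreover have "U \<inter> verts inc F = {u2, u1}"
      using only uV un1(3) un2(3) unfolding inner_def by blast
    ultimately show ?thesis by (auto simp: ear_shape_def)
  qed
qed

lemma ear_shape: "ear_shape inc U (verts inc F) F"
proof -
  have "card boundary = 0 \<or> card boundary = 1 \<or> card boundary = 2" using card_boundary_le_2 by linarith
  then consider "boundary = {}" | e0 where "boundary = {e0}" | "card boundary = 2"
    using finite_boundary card_1_singletonE by auto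
  then show ?thesis
  proof cases
    case (2 e0)
    then have "ends_in inc inner e0 \<le> 1" using ends_in_boundary by blast
    then consider "ends_in inc inner e0 = 0" | "ends_in inc inner e0 = 1" by linarith
    then show ?thesis
      using ear_shape_if_closed_boundary_edge ear_shape_if_pendant_boundary_edge 2 by cases
  qed (fact ear_shape_if_no_boundary ear_shape_if_two_boundary_edges)+
qed

end

lemma ear_imp_ear_shape: "multigraph_edges inc F \<Longrightarrow> ear inc U F \<Longrightarrow> ear_shape inc U (verts inc F) F"
  by (rule ear_graph.ear_shape) (unfold_locales)


subsection \<open>Circuits of M_k\<close>

text \<open>Removing an edge lowers the excess by at most one, so the excess passes through every value
  between 0 and excess X on a chain of subsets of X.\<close>
lemma exists_subset_excess_eq:
  assumes "multigraph_edges inc X" "1 \<le> k" "int k \<le> excess inc X"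
  shows "\<exists>D\<subseteq>X. excess inc D = int k"
  using assms(1,3)
proof (induction "card X" arbitrary: X rule: less_induct)
  case less
  show ?case
  proof (cases "excess inc X = int k")
    case False
    then have gt: "int k < excess inc X" using less.prems(2) by simp
    then have "X \<noteq> {}" using assms(2) by auto
    then obtain e where e: "e \<in> X" by blast
    have fX: "finite X" using less.prems(1) multigraph_edges_finite by blast
    have "card (verts inc (X - {e})) \<le> card (verts inc X)"
      using finite_verts[OF less.prems(1)] verts_mono[of "X - {e}" X inc] by (intro card_mono) auto
    then have "int k \<le> excess inc (X - {e})"
      using gt e fX by (simp add: excess_def card_Diff_singleton)
    moreover have "card (X - {e}) < card X" using card_Diff1_less[OF fX e] .
    moreover have "multigraph_edges inc (X - {e})" using multigraph_edges_subset[OF less.prems(1)] by blast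
    ultimately obtain D where "D \<subseteq> X - {e}" "excess inc D = int k" using less.hyps by meson
    then show ?thesis by blast
  qed blast
qed

lemma Mk_circuit_iff:
  assumes "graph V E inc" "1 \<le> k"
  shows "Mk_circuit E inc k C \<longleftrightarrow> C \<subseteq> E \<and> excess inc C = int k \<and> (\<forall>D\<subset>C. excess inc D < int k)"
proof -
  have card_iff: "card D = card (verts inc D) + k \<longleftrightarrow> excess inc D = int k" for D
    by (auto simp: excess_def)
  have nonempty: "excess inc D = int k \<Longrightarrow> D \<noteq> {}" for D using assms(2) by auto
  show ?thesis
  proof
    assume "Mk_circuit E inc k C"
    then have C: "C \<subseteq> E" "excess inc C = int k"
      and min: "\<And>D. D \<subseteq> E \<Longrightarrow> excess inc D = int k \<Longrightarrow> D \<subseteq> C \<Longrightarrow> D = C"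
      unfolding Mk_circuit_def Let_def card_iff using nonempty by auto
    have "excess inc D < int k" if D: "D \<subset> C" for D
    proof (rule ccontr)
      assume "\<not> excess inc D < int k"
      then have "int k \<le> excess inc D" by simp
      moreover have "multigraph_edges inc D" using graph_multigraph_edges[OF assms(1)] D C(1) by blast
      ultimately obtain D' where "D' \<subseteq> D" "excess inc D' = int k"
        using exists_subset_excess_eq[OF _ assms(2)] by blast
      then show False using min[of D'] D C(1) by blast
    qed
    then show "C \<subseteq> E \<and> excess inc C = int k \<and> (\<forall>D\<subset>C. excess inc D < int k)" using C by blast
  next
    assume C: "C \<subseteq> E \<and> excess inc C = int k \<and> (\<forall>D\<subset>C. excess inc D < int k)"
    have "D = C" if D: "excess inc D = int k" "D \<subseteq> C" for D
    proof (rule ccontr)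
      assume "D \<noteq> C"
      then have "excess inc D < int k" using C D(2) by blast
      then show False using D(1) by simp
    qed
    then show "Mk_circuit E inc k C"
      unfolding Mk_circuit_def Let_def card_iff using C nonempty by blast
  qed
qed

text \<open>A smallest subset of C with excess k is a circuit of M_k, and the remaining edges of C form
  an ear attached to it.\<close>
lemma Mk_circuit_Suc_decompose:
  assumes graph: "graph V E inc" and k: "1 \<le> k" and C: "Mk_circuit E inc (Suc k) C"
  obtains C' where "C' \<subseteq> C" "Mk_circuit E inc k C'" "ear inc (verts inc C') (C - C')"
proof -
  have "1 \<le> Suc k" by simp
  from C[unfolded Mk_circuit_iff[OF graph this]]
  have "C \<subseteq> E \<and> excess inc C = 1 + int k \<and> (\<forall>D\<subset>C. excess inc D < 1 + int k)"
    unfolding of_nat_Suc .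
  then have CE: "C \<subseteq> E" and eC: "excess inc C = 1 + int k" and minC: "\<forall>D\<subset>C. excess inc D < 1 + int k"
    by blast+
  have edges: "multigraph_edges inc C" using graph_multigraph_edges[OF graph CE] .
  have fC: "finite C" using edges multigraph_edges_finite by blast
  define P where "P D \<longleftrightarrow> D \<subseteq> C \<and> excess inc D = int k" for D
  have "int k \<le> excess inc C" using eC by simp
  then obtain D0 where "P D0" using exists_subset_excess_eq[OF edges k] by (auto simp: P_def)
  then obtain C' where C': "P C'" and least: "\<And>D. P D \<Longrightarrow> card C' \<le> card D"
    using ex_has_least_nat[of P D0 card] by blast
  have C'C: "C' \<subseteq> C" and eC': "excess inc C' = int k" using C' by (auto simp: P_def)
  have "excess inc D < int k" if D: "D \<subset> C'" for D
  proof (rule ccontr)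
    assume "\<not> excess inc D < int k"
    then have "int k \<le> excess inc D" by simp
    moreover have "multigraph_edges inc D" using multigraph_edges_subset[OF edges] D C'C by blast
    ultimately obtain D' where D': "D' \<subseteq> D" "excess inc D' = int k"
      using exists_subset_excess_eq[OF _ k] by blast
    then have "P D'" using D C'C by (auto simp: P_def)
    moreover have "card D' < card C'"
      using psubset_card_mono[OF finite_subset[OF C'C fC], of D'] D D'(1) by blast
    ultimately show False using least by (meson not_le)
  qed
  then have circ: "Mk_circuit E inc k C'"
    unfolding Mk_circuit_iff[OF graph k] using C'C CE eC' by blast
  have decomp: "excess inc (C' \<union> Q) = int k + int (card Q) - int (card (verts inc Q - verts inc C'))"
    if "Q \<subseteq> C - C'" for Q
  proof -
    have "multigraph_edges inc (C' \<union> Q)" using multigraph_edges_subset[OF edges] that C'C by blast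
    moreover have "C' \<inter> Q = {}" using that by blast
    ultimately show ?thesis using excess_Un_disjoint[of inc C' Q] eC' by simp
  qed
  have "C' \<union> (C - C') = C" using C'C by blast
  then have "card (C - C') = card (verts inc (C - C') - verts inc C') + 1"
    using decomp[of "C - C'"] eC by simp
  moreover have "card Q \<le> card (verts inc Q - verts inc C')" if Q: "Q \<subset> C - C'" for Q
  proof -
    have "C' \<union> Q \<subset> C" using Q C'C by blast
    then have "excess inc (C' \<union> Q) < 1 + int k" using minC by blast
    then show ?thesis using decomp[of Q] Q by simp
  qed
  ultimately show ?thesis using that[OF C'C circ] by (simp add: ear_def)
qed

lemma Mk_circuit_Suc_extend:
  assumes graph: "graph V E inc" and k: "1 \<le> k" and C': "Mk_circuit E inc k C'"
    and F: "F \<subseteq> E" "F \<inter> C' = {}" and ear: "ear inc (verts inc C') F"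
  shows "Mk_circuit E inc (Suc k) (C' \<union> F)"
proof -
  have C'E: "C' \<subseteq> E" and eC': "excess inc C' = int k" and minC': "\<forall>D\<subset>C'. excess inc D < int k"
    using C'[unfolded Mk_circuit_iff[OF graph k]] by blast+
  have edges: "multigraph_edges inc (C' \<union> F)" using graph_multigraph_edges[OF graph] C'E F(1) by blast
  have ear1: "card F = card (verts inc F - verts inc C') + 1"
    and ear2: "\<forall>Q\<subset>F. card Q \<le> card (verts inc Q - verts inc C')" using ear by (auto simp: ear_def)
  have "excess inc (C' \<union> F) = 1 + int k"
    using excess_Un_disjoint[OF edges] F(2) eC' ear1 by (simp add: Int_commute)
  moreover have "excess inc D < 1 + int k" if D: "D \<subset> C' \<union> F" for D
  proof -
    define D1 D2 where "D1 = D \<inter> C'" and "D2 = D \<inter> F"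
    have DD: "D = D1 \<union> D2" "D1 \<inter> D2 = {}" using D F(2) by (auto simp: D1_def D2_def)
    have edgesD: "multigraph_edges inc D" using multigraph_edges_subset[OF edges] D by blast
    have "verts inc D2 - verts inc C' \<subseteq> verts inc D2 - verts inc D1"
      using verts_mono[of D1 C' inc] by (auto simp: D1_def)
    moreover have "finite (verts inc D2)"
      using finite_verts multigraph_edges_subset[OF edgesD, of D2] DD(1) by blast
    ultimately have "card (verts inc D2 - verts inc C') \<le> card (verts inc D2 - verts inc D1)"
      by (intro card_mono) auto
    then have exD: "excess inc D \<le> excess inc D1 + int (card D2) - int (card (verts inc D2 - verts inc C'))"
      using excess_Un_disjoint[of inc D1 D2] edgesD DD by simp
    have D1: "D1 \<subseteq> C'" by (simp add: D1_def)
    show ?thesis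
    proof (cases "D2 = F")
      case True
      have "D1 \<noteq> C'" using D DD(1) True by blast
      then have "D1 \<subset> C'" using D1 by blast
      then have "excess inc D1 < int k" using minC' by blast
      moreover have "int (card D2) - int (card (verts inc D2 - verts inc C')) = 1" using ear1 True by simp
      ultimately show ?thesis using exD by linarith
    next
      case False
      then have "D2 \<subset> F" unfolding D2_def by blast
      then have "int (card D2) - int (card (verts inc D2 - verts inc C')) \<le> 0" using ear2 by simp
      moreover have "excess inc D1 \<le> int k"
      proof (cases "D1 = C'")
        case False
        then have "D1 \<subset> C'" using D1 by blast
        then have "excess inc D1 < int k" using minC' by blast
        then show ?thesis by simp
      qed (use eC' in simp)
      ultimately show ?thesis using exD by linarith
    qed
  qed
  moreover have "C' \<union> F \<subseteq> E" using C'E F(1) by blast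
  moreover have "1 \<le> Suc k" by simp
  ultimately show ?thesis unfolding Mk_circuit_iff[OF graph \<open>1 \<le> Suc k\<close>] of_nat_Suc by blast
qed


lemma Mk_circuit_one_iff_bicycle:
  assumes "graph V E inc" "C \<subseteq> E"
  shows "Mk_circuit E inc 1 C \<longleftrightarrow> is_bicycle inc (verts inc C) C"
proof -
  have edges: "multigraph_edges inc C" using graph_multigraph_edges[OF assms] .
  have eq1: "excess inc D = 1 \<longleftrightarrow> card D = card (verts inc D - {}) + 1" for D
    by (auto simp: excess_def)
  have lt1: "excess inc D < 1 \<longleftrightarrow> card D \<le> card (verts inc D - {})" for D
    by (auto simp: excess_def)
  have "Mk_circuit E inc 1 C \<longleftrightarrow> excess inc C = 1 \<and> (\<forall>D\<subset>C. excess inc D < 1)"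
    using Mk_circuit_iff[OF assms(1) order_refl, of C] assms(2) by simp
  also have "\<dots> \<longleftrightarrow> ear inc {} C" by (simp only: eq1 lt1 ear_def)
  also have "\<dots> \<longleftrightarrow> ear_shape inc {} (verts inc C) C"
    using ear_imp_ear_shape[OF edges] ear_shape_imp_ear[OF edges] by blast
  also have "\<dots> \<longleftrightarrow> is_bicycle inc (verts inc C) C" by (simp add: ear_shape_def)
  finally show ?thesis .
qed

lemma Mk_circuit_Suc_iff:
  assumes graph: "graph V E inc" and k: "1 \<le> k" and CE: "C \<subseteq> E"
  shows "Mk_circuit E inc (Suc k) C \<longleftrightarrow>
    (\<exists>C' W F. Mk_circuit E inc k C' \<and> is_subgraph V E inc W F \<and> F \<inter> C' = {} \<and>
       verts inc C = verts inc C' \<union> W \<and> C = C' \<union> F \<and> ear_shape inc (verts inc C') W F)"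
proof
  assume "Mk_circuit E inc (Suc k) C"
  then obtain C' where C': "C' \<subseteq> C" "Mk_circuit E inc k C'" "ear inc (verts inc C') (C - C')"
    by (rule Mk_circuit_Suc_decompose[OF graph k])
  have FE: "C - C' \<subseteq> E" using CE by blast
  have "is_subgraph V E inc (verts inc (C - C')) (C - C')" by (rule is_subgraph_verts[OF graph FE])
  moreover have "ear_shape inc (verts inc C') (verts inc (C - C')) (C - C')"
    by (rule ear_imp_ear_shape[OF graph_multigraph_edges[OF graph FE] C'(3)])
  moreover have C: "C = C' \<union> (C - C')" using C'(1) by blast
  moreover have "verts inc C = verts inc C' \<union> verts inc (C - C')" by (subst C) (rule verts_Un)
  moreover have "(C - C') \<inter> C' = {}" by blast
  ultimately show "\<exists>C' W F. Mk_circuit E inc k C' \<and> is_subgraph V E inc W F \<and> F \<inter> C' = {} \<and>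
       verts inc C = verts inc C' \<union> W \<and> C = C' \<union> F \<and> ear_shape inc (verts inc C') W F"
    using C'(2) by blast
next
  assume "\<exists>C' W F. Mk_circuit E inc k C' \<and> is_subgraph V E inc W F \<and> F \<inter> C' = {} \<and>
       verts inc C = verts inc C' \<union> W \<and> C = C' \<union> F \<and> ear_shape inc (verts inc C') W F"
  then obtain C' W F where C': "Mk_circuit E inc k C'" and F: "is_subgraph V E inc W F" "F \<inter> C' = {}"
    and C: "C = C' \<union> F" and shape: "ear_shape inc (verts inc C') W F" by blast
  have FE: "F \<subseteq> E" using F(1) by (simp add: is_subgraph_def)
  have "ear inc (verts inc C') F"
    using ear_shape_imp_ear[OF graph_multigraph_edges[OF graph FE] shape] by blast
  then show "Mk_circuit E inc (Suc k) C"
    unfolding C by (rule Mk_circuit_Suc_extend[OF graph k C' FE F(2)])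
qed

theorem mainTheorem9:
  fixes V :: "'v set" and E :: "'e set" and inc :: "'e \<Rightarrow> 'v set"
    and C :: "'e set" and k :: nat
  assumes "graph V E inc" and "C \<subseteq> E" and "k \<ge> 1"
  shows "(k = 1 \<longrightarrow> (Mk_circuit E inc 1 C \<longleftrightarrow> is_bicycle inc (verts inc C) C)) \<and>
         (k \<ge> 2 \<longrightarrow> (Mk_circuit E inc k C \<longleftrightarrow>
            (\<exists>C' W F. Mk_circuit E inc (k - 1) C' \<and> is_subgraph V E inc W F \<and> F \<inter> C' = {} \<and>
               verts inc C = verts inc C' \<union> W \<and> C = C' \<union> F \<and>
               ((\<exists>x y. is_path inc W F x y \<and> verts inc C' \<inter> W = {x, y}) \<or>
                (\<exists>x. is_lollipop inc W F x \<and> verts inc C' \<inter> W = {x}) \<or>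
                (is_cycle inc W F \<and> card (verts inc C' \<inter> W) = 1) \<or>
                (is_bicycle inc W F \<and> verts inc C' \<inter> W = {})))))"
proof (intro conjI impI)
  show "Mk_circuit E inc 1 C \<longleftrightarrow> is_bicycle inc (verts inc C) C"
    by (rule Mk_circuit_one_iff_bicycle[OF assms(1,2)])
next
  assume "2 \<le> k"
  then obtain j where k: "k = Suc j" and j: "1 \<le> j" by (cases k) auto
  show "Mk_circuit E inc k C \<longleftrightarrow>
            (\<exists>C' W F. Mk_circuit E inc (k - 1) C' \<and> is_subgraph V E inc W F \<and> F \<inter> C' = {} \<and>
               verts inc C = verts inc C' \<union> W \<and> C = C' \<union> F \<and>
               ((\<exists>x y. is_path inc W F x y \<and> verts inc C' \<inter> W = {x, y}) \<or>
                (\<exists>x. is_lollipop inc W F x \<and> verts inc C' \<inter> W = {x}) \<or>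
                (is_cycle inc W F \<and> card (verts inc C' \<inter> W) = 1) \<or>
                (is_bicycle inc W F \<and> verts inc C' \<inter> W = {})))"
    unfolding k diff_Suc_1 using Mk_circuit_Suc_iff[OF assms(1) j assms(2)] by (simp only: ear_shape_def)
qed

end
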